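(* For $k=1,\dots,m$, \[ r_{n,k}=\partial_{t_k}\sigma_n,\qquad R_{n,k}=\frac1{2\beta_n}\Big(-\partial_{t_k}\beta_n+\mathrm{sgn}(\omega_k)\sqrt{(\partial_{t_k}\beta_n)^2+4\beta_nr_{n,k}^2}\Big), \] where \[ \beta_n=\delta\sigma_n-\sigma_n+n(n+\alpha),\qquad \partial_{t_k}\beta_n=\sum_{j=1}^m t_j\,\partial^2_{t_kt_j}\sigma_n, \] and $\mathrm{sgn}(\omega_k)$ equals $1$, $-1$, $0$ for $\omega_k>0$, $\omega_k<0$, $\omega_k=0$ respectively.
   Context: Let $m\ge1$, $\alpha>-1$, $0<t_1<\dots<t_m$, real $\omega_0,\dots,\omega_m$ with $\sum_{k=0}^\ell\omega_k\ge0$ for $\ell=0,\dots,m$, $\theta$ the Heaviside function, $w_0(x)=x^\alpha e^{-x}$, $w(x;\vec t)=w_0(x)\big(\omega_0+\sum_k\omega_k\theta(x-t_k)\big)$ on $[0,\infty)$, $P_n$ the monic orthogonal polynomials w.r.t. $w$, $h_n=\int_0^\infty P_n^2w\,dx$, $\beta_n=h_n/h_{n-1}$, $D_n(\vec t)=\det\big(\int_0^\infty x^{i+j}w\,dx\big)_{i,j=0}^{n-1}$, $\delta=\sum_kt_k\partial_{t_k}$, $\sigma_n=\delta\ln D_n$, $R_{n,k}=\omega_k\frac{w_0(t_k)}{h_n}P_n^2(t_k)$, $r_{n,k}=\omega_k\frac{w_0(t_k)}{h_{n-1}}P_n(t_k)P_{n-1}(t_k)$. *)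

theory Defs
  imports "HOL-Analysis.Analysis" "HOL-Computational_Algebra.Polynomial"
          "Jordan_Normal_Form.Determinant"
begin

text \<open>Heaviside function (value at 0 is irrelevant for all integrals below).\<close>
definition heaviside :: "real \<Rightarrow> real" where
  "heaviside x = (if x \<ge> 0 then 1 else 0)"

definition w0 :: "real \<Rightarrow> real \<Rightarrow> real" where
  "w0 \<alpha> x = x powr \<alpha> * exp (- x)"

definition wgt :: "real \<Rightarrow> nat \<Rightarrow> (nat \<Rightarrow> real) \<Rightarrow> (nat \<Rightarrow> real) \<Rightarrow> real \<Rightarrow> real" where
  "wgt \<alpha> m \<omega> t x = w0 \<alpha> x * (\<omega> 0 + (\<Sum>k=1..m. \<omega> k * heaviside (x - t k)))"

definition moment :: "real \<Rightarrow> nat \<Rightarrow> (nat \<Rightarrow> real) \<Rightarrow> (nat \<Rightarrow> real) \<Rightarrow> nat \<Rightarrow> real" where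
  "moment \<alpha> m \<omega> t j = (LINT x:{0..}|lborel. x ^ j * wgt \<alpha> m \<omega> t x)"

definition hankelD :: "real \<Rightarrow> nat \<Rightarrow> (nat \<Rightarrow> real) \<Rightarrow> nat \<Rightarrow> (nat \<Rightarrow> real) \<Rightarrow> real" where
  "hankelD \<alpha> m \<omega> n t = det (mat n n (\<lambda>(i, j). moment \<alpha> m \<omega> t (i + j)))"

definition opoly :: "real \<Rightarrow> nat \<Rightarrow> (nat \<Rightarrow> real) \<Rightarrow> (nat \<Rightarrow> real) \<Rightarrow> nat \<Rightarrow> real poly" where
  "opoly \<alpha> m \<omega> t n = (THE p. degree p = n \<and> lead_coeff p = 1 \<and>
     (\<forall>j<n. (LINT x:{0..}|lborel. poly p x * x ^ j * wgt \<alpha> m \<omega> t x) = 0))"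

definition hnorm :: "real \<Rightarrow> nat \<Rightarrow> (nat \<Rightarrow> real) \<Rightarrow> (nat \<Rightarrow> real) \<Rightarrow> nat \<Rightarrow> real" where
  "hnorm \<alpha> m \<omega> t n = (LINT x:{0..}|lborel. (poly (opoly \<alpha> m \<omega> t n) x)\<^sup>2 * wgt \<alpha> m \<omega> t x)"

definition betan :: "real \<Rightarrow> nat \<Rightarrow> (nat \<Rightarrow> real) \<Rightarrow> nat \<Rightarrow> (nat \<Rightarrow> real) \<Rightarrow> real" where
  "betan \<alpha> m \<omega> n t = hnorm \<alpha> m \<omega> t n / hnorm \<alpha> m \<omega> t (n - 1)"

definition pd :: "((nat \<Rightarrow> real) \<Rightarrow> real) \<Rightarrow> nat \<Rightarrow> (nat \<Rightarrow> real) \<Rightarrow> real" where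
  "pd F k t = deriv (\<lambda>s. F (t(k := s))) (t k)"

definition sigman :: "real \<Rightarrow> nat \<Rightarrow> (nat \<Rightarrow> real) \<Rightarrow> nat \<Rightarrow> (nat \<Rightarrow> real) \<Rightarrow> real" where
  "sigman \<alpha> m \<omega> n t = (\<Sum>k=1..m. t k * pd (\<lambda>s. ln (hankelD \<alpha> m \<omega> n s)) k t)"

definition Rnk :: "real \<Rightarrow> nat \<Rightarrow> (nat \<Rightarrow> real) \<Rightarrow> nat \<Rightarrow> nat \<Rightarrow> (nat \<Rightarrow> real) \<Rightarrow> real" where
  "Rnk \<alpha> m \<omega> n k t = \<omega> k * w0 \<alpha> (t k) / hnorm \<alpha> m \<omega> t n * (poly (opoly \<alpha> m \<omega> t n) (t k))\<^sup>2"

definition rnk :: "real \<Rightarrow> nat \<Rightarrow> (nat \<Rightarrow> real) \<Rightarrow> nat \<Rightarrow> nat \<Rightarrow> (nat \<Rightarrow> real) \<Rightarrow> real" where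
  "rnk \<alpha> m \<omega> n k t = \<omega> k * w0 \<alpha> (t k) / hnorm \<alpha> m \<omega> t (n - 1) *
     poly (opoly \<alpha> m \<omega> t n) (t k) * poly (opoly \<alpha> m \<omega> t (n - 1)) (t k)"

end

theory Submission
  imports Defs "HOL-Real_Asymp.Real_Asymp"
begin

text \<open>
  The weight is nonnegative and positive on an interval, so its moment functional \<open>L\<close> is positive
  definite: the monic orthogonal polynomials \<open>P_j\<close> exist, are given by Gram--Schmidt, and
  \<open>D_n = h_0 \<cdots> h_(n-1)\<close>. Moving the jump \<open>t_k\<close> changes \<open>L\<close> to first order by
  \<open>q \<mapsto> -\<omega>_k w0(t_k) q(t_k)\<close>. Differentiating the orthogonality relations therefore gives
  \<open>\<partial>_k h_j = -\<omega>_k w0(t_k) P_j(t_k)^2\<close>, i.e. \<open>\<partial>_k ln D_n = - \<Sum>_(j<n) R_(j,k)\<close>, and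
  \<open>\<partial>_k p(n) = r_(n,k)\<close> for the coefficient \<open>p(n)\<close> of \<open>x^(n-1)\<close> in \<open>P_n\<close>.
  Integration by parts against \<open>x^\<alpha> e^(-x)\<close> gives the relation
  \<open>L(x q) = (\<alpha>+1) L(q) + L(x q') + \<Sum>_k \<omega>_k w0(t_k) t_k q(t_k)\<close>; applied to \<open>P_j^2\<close> and to
  \<open>P_n P_(n-1)\<close> it yields \<open>\<sigma>_n = p(n) + n(n+\<alpha>)\<close> and \<open>\<beta>_n = \<Sum>_k t_k r_(n,k) - p(n)\<close>, which
  give the first three identities. Finally \<open>\<partial>_k \<beta>_n = \<beta>_n (R_(n-1,k) - R_(n,k))\<close> and
  \<open>r_(n,k)^2 = \<beta>_n R_(n,k) R_(n-1,k)\<close>, so \<open>R_(n,k)\<close> is a root of a quadratic equation; the root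
  is the one with the sign of \<open>\<omega>_k\<close>, which \<open>R_(n,k)\<close> and \<open>R_(n-1,k)\<close> share.
\<close>

section \<open>Orthogonal polynomials of a positive definite moment functional\<close>

definition moment_functional :: "(nat \<Rightarrow> real) \<Rightarrow> real poly \<Rightarrow> real" where
  "moment_functional mu p = (\<Sum>i\<le>degree p. coeff p i * mu i)"

lemma moment_functional_eq_sum:
  "degree p \<le> N \<Longrightarrow> moment_functional mu p = (\<Sum>i\<le>N. coeff p i * mu i)"
  unfolding moment_functional_def by (rule sum.mono_neutral_left) (auto simp: coeff_eq_0)

lemma moment_functional_add:
  "moment_functional mu (p + q) = moment_functional mu p + moment_functional mu q"
proof -
  let ?N = "max (degree p) (degree q)"
  have "moment_functional mu (p + q) = (\<Sum>i\<le>?N. coeff (p + q) i * mu i)"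
    by (rule moment_functional_eq_sum) (simp add: degree_add_le)
  also have "\<dots> = (\<Sum>i\<le>?N. coeff p i * mu i) + (\<Sum>i\<le>?N. coeff q i * mu i)"
    by (simp add: algebra_simps sum.distrib)
  also have "\<dots> = moment_functional mu p + moment_functional mu q"
    by (simp add: moment_functional_eq_sum[of p ?N] moment_functional_eq_sum[of q ?N])
  finally show ?thesis .
qed

lemma moment_functional_smult:
  "moment_functional mu (Polynomial.smult c p) = c * moment_functional mu p"
  using moment_functional_eq_sum[of "Polynomial.smult c p" "degree p" mu]
  by (simp add: moment_functional_def sum_distrib_left mult.assoc)

lemma moment_functional_0 [simp]: "moment_functional mu 0 = 0"
  by (simp add: moment_functional_def)

lemma moment_functional_diff:
  "moment_functional mu (p - q) = moment_functional mu p - moment_functional mu q"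
  using moment_functional_add[of mu p "-q"] moment_functional_smult[of mu "-1" q] by simp

lemma moment_functional_sum:
  "finite A \<Longrightarrow> moment_functional mu (\<Sum>x\<in>A. f x) = (\<Sum>x\<in>A. moment_functional mu (f x))"
  by (induction A rule: finite_induct) (auto simp: moment_functional_add)

lemma moment_functional_monom: "moment_functional mu (monom c i) = c * mu i"
proof -
  have "moment_functional mu (monom c i) = (\<Sum>j\<le>i. coeff (monom c i) j * mu j)"
    by (rule moment_functional_eq_sum) (simp add: degree_monom_le)
  also have "\<dots> = c * mu i"
    by (subst sum.remove[of _ i]) (auto simp: coeff_monom)
  finally show ?thesis .
qed

lemma moment_functional_mult_eq_double_sum:
  assumes "degree p < n" "degree q < n"
  shows "moment_functional mu (p * q) = (\<Sum>a<n. \<Sum>b<n. coeff p a * mu (a + b) * coeff q b)"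
proof -
  have sum_monoms: "r = (\<Sum>a<n. monom (coeff r a) a)" if "degree r < n" for r :: "real poly"
  proof -
    have "{..<n} = {..n - 1}" using that by auto
    then show ?thesis using poly_as_sum_of_monoms'[of r "n - 1"] that by simp
  qed
  have "p * q = (\<Sum>a<n. \<Sum>b<n. monom (coeff p a * coeff q b) (a + b))"
    by (subst sum_monoms[OF assms(1)], subst sum_monoms[OF assms(2)]) (simp add: sum_product mult_monom)
  then show ?thesis by (simp add: moment_functional_sum moment_functional_monom mult_ac)
qed

definition pos_def_moments :: "(nat \<Rightarrow> real) \<Rightarrow> bool" where
  "pos_def_moments mu \<longleftrightarrow> (\<forall>p. p \<noteq> 0 \<longrightarrow> moment_functional mu (p * p) > 0)"

definition is_monic_op :: "(nat \<Rightarrow> real) \<Rightarrow> nat \<Rightarrow> real poly \<Rightarrow> bool" where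
  "is_monic_op mu n p \<longleftrightarrow> degree p = n \<and> coeff p n = 1 \<and>
     (\<forall>q. degree q < n \<longrightarrow> moment_functional mu (p * q) = 0)"

definition monic_op :: "(nat \<Rightarrow> real) \<Rightarrow> nat \<Rightarrow> real poly" where
  "monic_op mu n = (THE p. is_monic_op mu n p)"

lemma degree_less_if_coeff_eq_0:
  fixes p :: "'a::zero poly"
  assumes "degree p \<le> d" "coeff p d = 0" "p \<noteq> 0"
  shows "degree p < d"
  using assms leading_coeff_neq_0[OF assms(3)] le_neq_implies_less by fastforce

lemma orthogonal_if_orthogonal_to_monic_basis:
  assumes Q: "\<And>i. i < n \<Longrightarrow> degree (Q i) = i \<and> coeff (Q i) i = 1"
    and orth: "\<And>i. i < n \<Longrightarrow> moment_functional mu (p * Q i) = 0"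
    and "degree q < n"
  shows "moment_functional mu (p * q) = 0"
  using \<open>degree q < n\<close>
proof (induction "degree q" arbitrary: q rule: less_induct)
  case less
  define d where "d = degree q"
  define r where "r = q - Polynomial.smult (lead_coeff q) (Q d)"
  have Qd: "degree (Q d) = d" "coeff (Q d) d = 1" using Q less.prems d_def by auto
  have "moment_functional mu (p * r) = 0"
  proof (cases "r = 0")
    case False
    have "degree r \<le> d" unfolding r_def using Qd d_def
      by (intro degree_diff_le) (auto intro: order_trans[OF degree_smult_le])
    moreover have "coeff r d = 0" using Qd by (simp add: r_def d_def)
    ultimately have "degree r < d" using False degree_less_if_coeff_eq_0 by blast
    then show ?thesis using less.hyps less.prems d_def by force
  qed simp
  moreover have "p * q = p * r + Polynomial.smult (lead_coeff q) (p * Q d)"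
    by (simp add: r_def right_diff_distrib)
  ultimately show ?case
    using orth[of d] less.prems d_def by (simp add: moment_functional_add moment_functional_smult)
qed

lemma is_monic_op_iff_monomials:
  "is_monic_op mu n p \<longleftrightarrow> degree p = n \<and> coeff p n = 1 \<and>
     (\<forall>j<n. moment_functional mu (p * monom 1 j) = 0)"
  unfolding is_monic_op_def
  by (auto simp: degree_monom_eq intro: orthogonal_if_orthogonal_to_monic_basis[of n "monom 1"])

lemma is_monic_op_unique:
  assumes pd: "pos_def_moments mu" and p: "is_monic_op mu n p" and q: "is_monic_op mu n q"
  shows "p = q"
proof (rule ccontr)
  assume "p \<noteq> q"
  then have d0: "p - q \<noteq> 0" by simp
  have "degree (p - q) \<le> n" using p q by (auto simp: is_monic_op_def intro: degree_diff_le)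
  moreover have "coeff (p - q) n = 0" using p q by (simp add: is_monic_op_def)
  ultimately have "degree (p - q) < n" using d0 degree_less_if_coeff_eq_0 by blast
  then have "moment_functional mu ((p - q) * (p - q)) = 0"
    using p q by (simp add: left_diff_distrib moment_functional_diff is_monic_op_def)
  moreover have "moment_functional mu ((p - q) * (p - q)) > 0"
    using pd d0 by (simp add: pos_def_moments_def)
  ultimately show False by simp
qed

lemma is_monic_op_orthogonal:
  assumes p: "is_monic_op mu i p" and q: "is_monic_op mu j q" and "i \<noteq> j"
  shows "moment_functional mu (p * q) = 0"
proof (cases "i < j")
  case True
  then have "moment_functional mu (q * p) = 0" using p q by (simp add: is_monic_op_def)
  then show ?thesis by (simp add: mult.commute)
next
  case False
  then show ?thesis using p q \<open>i \<noteq> j\<close> by (simp add: is_monic_op_def)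
qed

lemma is_monic_op_gram_schmidt:
  assumes pd: "pos_def_moments mu" and Q: "\<And>j. j < n \<Longrightarrow> is_monic_op mu j (Q j)"
  shows "is_monic_op mu n (monom 1 n - (\<Sum>j<n. Polynomial.smult
           (moment_functional mu (monom 1 n * Q j) / moment_functional mu (Q j * Q j)) (Q j)))"
proof -
  let ?L = "moment_functional mu"
  define c where "c j = ?L (monom 1 n * Q j) / ?L (Q j * Q j)" for j
  define S where "S = (\<Sum>j<n. Polynomial.smult (c j) (Q j))"
  have S_small: "S = 0 \<or> degree S < n"
  proof (cases n)
    case (Suc n')
    have "degree S \<le> n'" unfolding S_def
      by (rule degree_sum_le)
        (use Q Suc in \<open>auto intro: order_trans[OF degree_smult_le] simp: is_monic_op_def\<close>)
    then show ?thesis using Suc by simp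
  qed (simp add: S_def)
  then have degree: "degree (monom 1 n - S) = n"
    using degree_add_eq_left[of "-S" "monom 1 n"] by (auto simp: degree_monom_eq)
  have "coeff S n = 0" using S_small coeff_eq_0 by fastforce
  then have lead: "coeff (monom 1 n - S) n = 1" by simp
  have "?L ((monom 1 n - S) * Q i) = 0" if i: "i < n" for i
  proof -
    have "?L ((monom 1 n - S) * Q i) = ?L (monom 1 n * Q i) - (\<Sum>j<n. c j * ?L (Q j * Q i))"
      by (simp add: S_def left_diff_distrib sum_distrib_right moment_functional_diff
          moment_functional_sum moment_functional_smult)
    also have "(\<Sum>j<n. c j * ?L (Q j * Q i)) = c i * ?L (Q i * Q i)"
      using i is_monic_op_orthogonal[OF Q Q[OF i]] by (subst sum.remove[of _ i]) auto
    also have "c i * ?L (Q i * Q i) = ?L (monom 1 n * Q i)"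
    proof -
      have "Q i \<noteq> 0" using Q[OF i] by (auto simp: is_monic_op_def)
      then have "?L (Q i * Q i) > 0" using pd unfolding pos_def_moments_def by blast
      then show ?thesis by (simp add: c_def)
    qed
    finally show ?thesis by simp
  qed
  then have "\<forall>q. degree q < n \<longrightarrow> ?L ((monom 1 n - S) * q) = 0"
    using Q by (auto simp: is_monic_op_def intro: orthogonal_if_orthogonal_to_monic_basis[of n Q])
  with degree lead show ?thesis by (simp add: is_monic_op_def S_def c_def)
qed

lemma monic_op_eqI: "pos_def_moments mu \<Longrightarrow> is_monic_op mu n p \<Longrightarrow> monic_op mu n = p"
  unfolding monic_op_def using is_monic_op_unique by blast

lemma monic_op_eq_gram_schmidt:
  assumes pd: "pos_def_moments mu"
  shows "is_monic_op mu n (monic_op mu n) \<and>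
    monic_op mu n = monom 1 n - (\<Sum>j<n. Polynomial.smult
      (moment_functional mu (monom 1 n * monic_op mu j) /
       moment_functional mu (monic_op mu j * monic_op mu j)) (monic_op mu j))"
proof (induction n rule: less_induct)
  case (less n)
  let ?q = "monom 1 n - (\<Sum>j<n. Polynomial.smult
      (moment_functional mu (monom 1 n * monic_op mu j) /
       moment_functional mu (monic_op mu j * monic_op mu j)) (monic_op mu j))"
  have q: "is_monic_op mu n ?q"
    by (rule is_monic_op_gram_schmidt[OF pd]) (use less in blast)
  with monic_op_eqI[OF pd q] show ?case by simp
qed

lemma monic_op_is_monic_op: "pos_def_moments mu \<Longrightarrow> is_monic_op mu n (monic_op mu n)"
  using monic_op_eq_gram_schmidt by blast

lemma degree_monic_op: "pos_def_moments mu \<Longrightarrow> degree (monic_op mu n) = n"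
  using monic_op_is_monic_op by (simp add: is_monic_op_def)

lemma coeff_monic_op_degree: "pos_def_moments mu \<Longrightarrow> coeff (monic_op mu n) n = 1"
  using monic_op_is_monic_op[of mu n] by (simp add: is_monic_op_def)

lemma moment_functional_monic_op_orthogonal:
  "pos_def_moments mu \<Longrightarrow> degree q < n \<Longrightarrow> moment_functional mu (monic_op mu n * q) = 0"
  using monic_op_is_monic_op[of mu n] by (simp add: is_monic_op_def)

lemma monic_op_norm_pos:
  "pos_def_moments mu \<Longrightarrow> moment_functional mu (monic_op mu n * monic_op mu n) > 0"
proof -
  assume pd: "pos_def_moments mu"
  then have "monic_op mu n \<noteq> 0" using coeff_monic_op_degree[of mu n] by auto
  with pd show ?thesis unfolding pos_def_moments_def by blast
qed

lemma moment_functional_monic_op_mult: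
  assumes pd: "pos_def_moments mu" and "degree q \<le> n"
  shows "moment_functional mu (monic_op mu n * q) =
    coeff q n * moment_functional mu (monic_op mu n * monic_op mu n)"
proof -
  define r where "r = q - Polynomial.smult (coeff q n) (monic_op mu n)"
  have "moment_functional mu (monic_op mu n * r) = 0"
  proof (cases "r = 0")
    case False
    have "degree r \<le> n" unfolding r_def using \<open>degree q \<le> n\<close> degree_monic_op[OF pd, of n]
      by (metis degree_diff_le degree_smult_le le_refl order_trans)
    moreover have "coeff r n = 0" using coeff_monic_op_degree[OF pd] by (simp add: r_def)
    ultimately have "degree r < n" using False degree_less_if_coeff_eq_0 by blast
    then show ?thesis using moment_functional_monic_op_orthogonal[OF pd] by blast
  qed simp
  moreover have "monic_op mu n * q = monic_op mu n * r + Polynomial.smult (coeff q n) (monic_op mu n * monic_op mu n)"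
    by (simp add: r_def right_diff_distrib)
  ultimately show ?thesis
    by (simp add: moment_functional_add moment_functional_smult)
qed

lemma det_coeff_matrix_monic_op:
  assumes pd: "pos_def_moments mu"
  shows "det (mat n n (\<lambda>(i, j). coeff (monic_op mu i) j)) = 1"
proof -
  let ?A = "mat n n (\<lambda>(i, j). coeff (monic_op mu i) j)"
  have "det ?A = prod_list (diag_mat ?A)"
    by (rule det_lower_triangular[of n]) (auto simp: coeff_eq_0 degree_monic_op[OF pd])
  also have "diag_mat ?A = map (\<lambda>i. 1) [0..<n]"
    by (auto simp: diag_mat_def coeff_monic_op_degree[OF pd] intro!: map_cong)
  finally show ?thesis by (simp add: map_replicate_const)
qed

text \<open>Conjugating the Hankel matrix by the unitriangular matrix of coefficients of the monic
  orthogonal polynomials gives the diagonal matrix of their norms.\<close>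
lemma det_hankel_eq_prod_norms:
  assumes pd: "pos_def_moments mu"
  shows "det (mat n n (\<lambda>(i, j). mu (i + j))) =
    (\<Prod>j<n. moment_functional mu (monic_op mu j * monic_op mu j))"
proof -
  let ?P = "monic_op mu"
  define H where "H = mat n n (\<lambda>(i, j). mu (i + j))"
  define A where "A = mat n n (\<lambda>(i, j). coeff (?P i) j)"
  define D where "D = mat n n (\<lambda>(i, j). moment_functional mu (?P i * ?P j))"
  have carrier: "H \<in> carrier_mat n n" "A \<in> carrier_mat n n" "D \<in> carrier_mat n n"
    by (auto simp: H_def A_def D_def)
  have det_A: "det A = 1"
    unfolding A_def by (rule det_coeff_matrix_monic_op[OF pd])
  have conj: "A * H * transpose_mat A = D"
  proof (rule eq_matI)
    fix i j assume "i < dim_row D" "j < dim_col D"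
    then have ij: "i < n" "j < n" by (auto simp: D_def)
    have "(A * H * transpose_mat A) $$ (i, j) =
        (\<Sum>b<n. (\<Sum>a<n. coeff (?P i) a * mu (a + b)) * coeff (?P j) b)"
      using ij by (simp add: A_def H_def scalar_prod_def atLeast0LessThan)
    also have "\<dots> = (\<Sum>a<n. \<Sum>b<n. coeff (?P i) a * mu (a + b) * coeff (?P j) b)"
      by (simp add: sum_distrib_right) (rule sum.swap)
    also have "\<dots> = moment_functional mu (?P i * ?P j)"
      by (rule moment_functional_mult_eq_double_sum[symmetric]) (use ij degree_monic_op[OF pd] in auto)
    finally show "(A * H * transpose_mat A) $$ (i, j) = D $$ (i, j)"
      using ij by (simp add: D_def)
  qed (auto simp: A_def H_def D_def)
  have "det D = det A * det H * det (transpose_mat A)"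
    unfolding conj[symmetric] using carrier by (simp add: det_mult[of _ n] mult_carrier_mat)
  then have "det D = det H"
    using det_A det_transpose[OF carrier(2)] by simp
  moreover have "det D = prod_list (diag_mat D)"
    by (rule det_upper_triangular[OF _ carrier(3)], rule upper_triangularI)
      (auto simp: D_def moment_functional_monic_op_orthogonal[OF pd] degree_monic_op[OF pd])
  moreover have "diag_mat D = map (\<lambda>j. moment_functional mu (?P j * ?P j)) [0..<n]"
    by (auto simp: diag_mat_def D_def intro!: map_cong)
  ultimately show ?thesis
    by (simp add: H_def prod.list_conv_set_nth atLeast0LessThan)
qed

section \<open>Consequences of a Pearson-type relation\<close>

lemma coeff_x_mult_pderiv: "coeff (monom 1 (Suc 0) * pderiv q) i = of_nat i * coeff q i"
  by (cases i) (auto simp: coeff_monom_mult coeff_pderiv)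

lemma degree_x_mult_pderiv_le: "degree (monom 1 (Suc 0) * pderiv q) \<le> degree q"
  by (rule degree_le) (auto simp: coeff_x_mult_pderiv coeff_eq_0)

text \<open>The coefficient \<open>p(n)\<close> of \<open>x^(n-1)\<close> in \<open>P_n\<close>, written so that it is \<open>0\<close> for \<open>n = 0\<close>.\<close>
definition subleading_coeff :: "(nat \<Rightarrow> real) \<Rightarrow> nat \<Rightarrow> real" where
  "subleading_coeff mu n = coeff (monom 1 1 * monic_op mu n) n"

lemma subleading_coeff_0 [simp]: "subleading_coeff mu 0 = 0"
  by (simp add: subleading_coeff_def coeff_monom_mult)

lemma subleading_coeff_eq: "n \<ge> 1 \<Longrightarrow> subleading_coeff mu n = coeff (monic_op mu n) (n - 1)"
  by (cases n) (simp_all add: subleading_coeff_def coeff_monom_mult)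

text \<open>By integration by parts, the moment functional of \<open>x^\<alpha> e^(-x)\<close> satisfies this relation
  with \<open>bdry = 0\<close>; jumps of the weight contribute boundary terms.\<close>
locale pearson_functional =
  fixes mu :: "nat \<Rightarrow> real" and \<alpha> :: real and bdry :: "real poly \<Rightarrow> real"
  assumes pos_def: "pos_def_moments mu"
    and x_mult: "\<And>q. moment_functional mu (monom 1 1 * q) =
      (\<alpha> + 1) * moment_functional mu q + moment_functional mu (monom 1 1 * pderiv q) + bdry q"
begin

abbreviation (input) L where "L \<equiv> moment_functional mu"
abbreviation (input) P where "P \<equiv> monic_op mu"
abbreviation (input) h where "h j \<equiv> L (P j * P j)"

lemma bdry_monic_op_sq:
  "bdry (P j * P j) = (subleading_coeff mu j - subleading_coeff mu (Suc j) - (\<alpha> + 1) - 2 * j) * h j"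
proof -
  define r where "r = monom 1 1 * P j - P (Suc j)"
  have "degree r \<le> j"
  proof (rule degree_le, intro allI impI)
    fix i assume "j < i"
    then consider "i = Suc j" | "i > Suc j" by linarith
    then show "coeff r i = 0"
      by cases (simp_all add: r_def coeff_monom_mult coeff_eq_0 degree_monic_op[OF pos_def]
        coeff_monic_op_degree[OF pos_def])
  qed
  moreover have "coeff r j = subleading_coeff mu j - subleading_coeff mu (Suc j)"
    by (simp add: r_def subleading_coeff_def coeff_monom_mult)
  moreover have "L (P (Suc j) * P j) = 0"
    by (rule moment_functional_monic_op_orthogonal[OF pos_def]) (simp add: degree_monic_op[OF pos_def])
  moreover have "monom 1 1 * (P j * P j) = P j * r + P (Suc j) * P j"
    by (simp add: r_def algebra_simps)
  ultimately have "L (monom 1 1 * (P j * P j)) = (subleading_coeff mu j - subleading_coeff mu (Suc j)) * h j"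
    using moment_functional_monic_op_mult[OF pos_def, of r j] by (simp add: moment_functional_add)
  moreover have "L (monom 1 1 * pderiv (P j * P j)) = 2 * j * h j"
  proof -
    have half: "L (P j * (monom 1 1 * pderiv (P j))) = j * h j"
      using moment_functional_monic_op_mult[OF pos_def, of "monom 1 1 * pderiv (P j)" j]
        degree_x_mult_pderiv_le[of "P j"]
      by (simp add: coeff_x_mult_pderiv coeff_monic_op_degree[OF pos_def] degree_monic_op[OF pos_def])
    have split: "monom 1 1 * pderiv (P j * P j) = P j * (monom 1 1 * pderiv (P j)) + P j * (monom 1 1 * pderiv (P j))"
      by (simp add: pderiv_mult algebra_simps)
    show ?thesis unfolding split moment_functional_add half by simp
  qed
  ultimately show ?thesis
    using x_mult[of "P j * P j"] by (simp add: algebra_simps)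
qed

lemma sum_bdry_monic_op_sq_div_norm:
  "(\<Sum>j<n. bdry (P j * P j) / h j) = - subleading_coeff mu n - n * (n + \<alpha>)"
proof (induction n)
  case (Suc n)
  have "bdry (P n * P n) / h n = subleading_coeff mu n - subleading_coeff mu (Suc n) - (\<alpha> + 1) - 2 * n"
    using bdry_monic_op_sq[of n] monic_op_norm_pos[OF pos_def, of n] by simp
  with Suc show ?case by (simp add: algebra_simps)
qed simp

lemma norm_monic_op_eq_bdry:
  assumes n: "n \<ge> 1"
  shows "h n = - subleading_coeff mu n * h (n - 1) + bdry (P n * P (n - 1))"
proof -
  let ?Q = "P (n - 1)"
  have "L (P n * (monom 1 1 * ?Q)) = h n"
    using moment_functional_monic_op_mult[OF pos_def, of "monom 1 1 * ?Q" n] n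
      degree_mult_le[of "monom 1 1" ?Q]
    by (simp add: degree_monom_eq degree_monic_op[OF pos_def] coeff_monom_mult coeff_monic_op_degree[OF pos_def])
  moreover have orth: "L (P n * ?Q) = 0"
    using moment_functional_monic_op_orthogonal[OF pos_def] n by (simp add: degree_monic_op[OF pos_def])
  moreover have "L (monom 1 1 * pderiv (P n * ?Q)) = - subleading_coeff mu n * h (n - 1)"
  proof -
    define r where "r = monom 1 1 * pderiv (P n) - Polynomial.smult n (P n)"
    have "degree r \<le> n - 1"
    proof (rule degree_le, intro allI impI)
      fix i assume "n - 1 < i"
      then consider "i = n" | "i > n" by linarith
      then show "coeff r i = 0"
        by cases (simp_all add: r_def coeff_x_mult_pderiv coeff_eq_0 degree_monic_op[OF pos_def]
          coeff_monic_op_degree[OF pos_def])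
    qed
    moreover have "coeff r (n - 1) = - subleading_coeff mu n"
      using n by (simp add: r_def coeff_x_mult_pderiv subleading_coeff_eq of_nat_diff algebra_simps)
    ultimately have "L (?Q * r) = - subleading_coeff mu n * h (n - 1)"
      using moment_functional_monic_op_mult[OF pos_def] by simp
    moreover have "L (P n * (monom 1 1 * pderiv ?Q)) = 0"
      using moment_functional_monic_op_orthogonal[OF pos_def] degree_x_mult_pderiv_le[of ?Q] n
      by (simp add: degree_monic_op[OF pos_def])
    moreover have "monom 1 1 * pderiv (P n * ?Q) =
        P n * (monom 1 1 * pderiv ?Q) + (?Q * r + Polynomial.smult n (P n * ?Q))"
      by (simp add: pderiv_mult r_def algebra_simps)
    ultimately show ?thesis using orth by (simp add: moment_functional_add moment_functional_smult)
  qed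
  ultimately show ?thesis
    using x_mult[of "P n * ?Q"] by (simp add: mult_ac)
qed

end

section \<open>Deforming the moment functional by moving a point\<close>

definition has_coeff_derivative :: "(real \<Rightarrow> real poly) \<Rightarrow> real poly \<Rightarrow> real \<Rightarrow> bool" where
  "has_coeff_derivative P P' s0 \<longleftrightarrow> (\<forall>i. ((\<lambda>s. coeff (P s) i) has_real_derivative coeff P' i) (at s0))"

lemma has_coeff_derivative_const: "has_coeff_derivative (\<lambda>s. p) 0 s0"
  by (simp add: has_coeff_derivative_def)

lemma has_coeff_derivative_diff:
  "has_coeff_derivative P P' s0 \<Longrightarrow> has_coeff_derivative Q Q' s0 \<Longrightarrow>
    has_coeff_derivative (\<lambda>s. P s - Q s) (P' - Q') s0"
  by (auto simp: has_coeff_derivative_def intro!: DERIV_diff)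

lemma has_coeff_derivative_sum:
  "finite A \<Longrightarrow> (\<And>j. j \<in> A \<Longrightarrow> has_coeff_derivative (P j) (P' j) s0) \<Longrightarrow>
    has_coeff_derivative (\<lambda>s. \<Sum>j\<in>A. P j s) (\<Sum>j\<in>A. P' j) s0"
  by (induction A rule: finite_induct) (auto simp: has_coeff_derivative_def intro!: DERIV_add)

lemma has_coeff_derivative_smult:
  assumes f: "(f has_real_derivative f') (at s0)" and P: "has_coeff_derivative P P' s0"
  shows "has_coeff_derivative (\<lambda>s. Polynomial.smult (f s) (P s))
           (Polynomial.smult f' (P s0) + Polynomial.smult (f s0) P') s0"
  unfolding has_coeff_derivative_def
proof
  fix i
  have "((\<lambda>s. f s * coeff (P s) i) has_real_derivative f' * coeff (P s0) i + coeff P' i * f s0) (at s0)"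
    by (rule DERIV_mult[OF f]) (use P in \<open>simp add: has_coeff_derivative_def\<close>)
  then show "((\<lambda>s. coeff (Polynomial.smult (f s) (P s)) i) has_real_derivative
      coeff (Polynomial.smult f' (P s0) + Polynomial.smult (f s0) P') i) (at s0)"
    by (simp add: mult_ac)
qed

lemma has_coeff_derivative_mult:
  assumes P: "has_coeff_derivative P P' s0" and Q: "has_coeff_derivative Q Q' s0"
  shows "has_coeff_derivative (\<lambda>s. P s * Q s) (P' * Q s0 + P s0 * Q') s0"
  unfolding has_coeff_derivative_def
proof
  fix i
  have "((\<lambda>s. \<Sum>j\<le>i. coeff (P s) j * coeff (Q s) (i - j)) has_real_derivative
      (\<Sum>j\<le>i. coeff P' j * coeff (Q s0) (i - j) + coeff Q' (i - j) * coeff (P s0) j)) (at s0)"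
    by (intro DERIV_sum DERIV_mult) (use P Q in \<open>auto simp: has_coeff_derivative_def\<close>)
  then show "((\<lambda>s. coeff (P s * Q s) i) has_real_derivative coeff (P' * Q s0 + P s0 * Q') i) (at s0)"
    by (simp add: coeff_mult sum.distrib mult.commute[of "coeff Q' _"])
qed

lemma has_coeff_derivative_cong_ev:
  assumes "\<forall>\<^sub>F s in nhds s0. P s = Q s" and "has_coeff_derivative P P' s0"
  shows "has_coeff_derivative Q P' s0"
  unfolding has_coeff_derivative_def
proof
  fix i
  have "\<forall>\<^sub>F s in nhds s0. coeff (P s) i = coeff (Q s) i"
    using assms(1) by eventually_elim simp
  from DERIV_cong_ev[OF refl this refl, of "coeff P' i"] assms(2)
  show "((\<lambda>s. coeff (Q s) i) has_real_derivative coeff P' i) (at s0)"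
    unfolding has_coeff_derivative_def by blast
qed

lemma coeff_eq_0_if_has_coeff_derivative_const:
  assumes "\<forall>\<^sub>F s in nhds s0. coeff (P s) i = v" and "has_coeff_derivative P P' s0"
  shows "coeff P' i = 0"
proof -
  have "((\<lambda>s. coeff (P s) i) has_real_derivative 0) (at s0)"
    using DERIV_cong_ev[OF refl assms(1) refl, of 0] by simp
  moreover have "((\<lambda>s. coeff (P s) i) has_real_derivative coeff P' i) (at s0)"
    using assms(2) by (simp add: has_coeff_derivative_def)
  ultimately show ?thesis using DERIV_unique by metis
qed

lemma degree_le_if_has_coeff_derivative:
  assumes "\<forall>\<^sub>F s in nhds s0. degree (P s) \<le> N" and P: "has_coeff_derivative P P' s0"
  shows "degree P' \<le> N"
proof (rule degree_le, intro allI impI)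
  fix i assume "N < i"
  have "\<forall>\<^sub>F s in nhds s0. coeff (P s) i = 0"
    using assms(1) by eventually_elim (use \<open>N < i\<close> in \<open>auto intro: coeff_eq_0\<close>)
  then show "coeff P' i = 0" by (rule coeff_eq_0_if_has_coeff_derivative_const[OF _ P])
qed

lemma poly_eq_sum_atMost:
  fixes p :: "real poly"
  assumes "degree p \<le> N"
  shows "poly p x = (\<Sum>i\<le>N. coeff p i * x ^ i)"
  unfolding poly_altdef by (rule sum.mono_neutral_left) (use assms in \<open>auto simp: coeff_eq_0\<close>)

lemma differentiable_poly_if_has_coeff_derivative:
  assumes ev: "\<forall>\<^sub>F s in nhds s0. degree (P s) \<le> N" and P: "has_coeff_derivative P P' s0"
    and x: "(x has_real_derivative x') (at s0)"
  shows "\<exists>D. ((\<lambda>s. poly (P s) (x s)) has_real_derivative D) (at s0)"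
proof -
  define D where "D = (\<Sum>i\<le>N. coeff P' i * x s0 ^ i + of_nat i * (x' * x s0 ^ (i - 1)) * coeff (P s0) i)"
  have "((\<lambda>s. \<Sum>i\<le>N. coeff (P s) i * x s ^ i) has_real_derivative D) (at s0)"
    unfolding D_def
    by (intro DERIV_sum DERIV_mult) (use P DERIV_power[OF x] in \<open>simp_all add: has_coeff_derivative_def\<close>)
  moreover have ev_sum: "\<forall>\<^sub>F s in nhds s0. poly (P s) (x s) = (\<Sum>i\<le>N. coeff (P s) i * x s ^ i)"
    using ev by eventually_elim (rule poly_eq_sum_atMost)
  ultimately have "((\<lambda>s. poly (P s) (x s)) has_real_derivative D) (at s0)"
    using DERIV_cong_ev[OF refl ev_sum refl] by simp
  then show ?thesis by blast
qed

text \<open>The derivative of the moment functional at \<open>s0\<close> is \<open>q \<mapsto> - c q(s0)\<close>: this is how moving a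
  jump of the weight located at \<open>s0\<close> acts on its moments.\<close>
locale moment_deformation =
  fixes mu :: "real \<Rightarrow> nat \<Rightarrow> real" and s0 c :: real
  assumes eventually_pos_def: "\<forall>\<^sub>F s in nhds s0. pos_def_moments (mu s)"
    and has_real_derivative_moment: "\<And>i. ((\<lambda>s. mu s i) has_real_derivative - (c * s0 ^ i)) (at s0)"
begin

lemma pos_def: "pos_def_moments (mu s0)"
  using eventually_pos_def eventually_nhds_x_imp_x by blast

lemma eventually_degree_monic_op: "\<forall>\<^sub>F s in nhds s0. degree (monic_op (mu s) n) = n"
  using eventually_pos_def by eventually_elim (rule degree_monic_op)

lemma has_real_derivative_moment_functional:
  assumes Q: "has_coeff_derivative Q Q' s0" and ev: "\<forall>\<^sub>F s in nhds s0. degree (Q s) \<le> N"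
  shows "((\<lambda>s. moment_functional (mu s) (Q s)) has_real_derivative
           moment_functional (mu s0) Q' - c * poly (Q s0) s0) (at s0)"
proof -
  have "degree Q' \<le> N" by (rule degree_le_if_has_coeff_derivative[OF ev Q])
  moreover have "degree (Q s0) \<le> N" using ev eventually_nhds_x_imp_x by blast
  ultimately have "(\<Sum>i\<le>N. coeff Q' i * mu s0 i + - (c * s0 ^ i) * coeff (Q s0) i) =
      moment_functional (mu s0) Q' - c * poly (Q s0) s0"
    by (simp add: moment_functional_eq_sum poly_eq_sum_atMost sum.distrib sum_subtractf sum_distrib_left mult_ac)
  moreover have "((\<lambda>s. \<Sum>i\<le>N. coeff (Q s) i * mu s i) has_real_derivative
       (\<Sum>i\<le>N. coeff Q' i * mu s0 i + - (c * s0 ^ i) * coeff (Q s0) i)) (at s0)"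
    by (intro DERIV_sum DERIV_mult has_real_derivative_moment) (use Q in \<open>auto simp: has_coeff_derivative_def\<close>)
  moreover have ev_sum: "\<forall>\<^sub>F s in nhds s0. moment_functional (mu s) (Q s) = (\<Sum>i\<le>N. coeff (Q s) i * mu s i)"
    using ev by eventually_elim (rule moment_functional_eq_sum)
  ultimately show ?thesis using DERIV_cong_ev[OF refl ev_sum refl] by simp
qed

lemma differentiable_moment_functional:
  assumes "has_coeff_derivative Q Q' s0" and "\<forall>\<^sub>F s in nhds s0. degree (Q s) \<le> N"
  shows "\<exists>D. ((\<lambda>s. moment_functional (mu s) (Q s)) has_real_derivative D) (at s0)"
  using has_real_derivative_moment_functional[OF assms] by blast

text \<open>Differentiate the Gram--Schmidt formula.\<close>
lemma ex_has_coeff_derivative_monic_op: "\<exists>P'. has_coeff_derivative (\<lambda>s. monic_op (mu s) n) P' s0"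
proof (induction n rule: less_induct)
  case (less n)
  let ?P = "\<lambda>s. monic_op (mu s)"
  obtain D where D: "\<And>j. j < n \<Longrightarrow> has_coeff_derivative (\<lambda>s. ?P s j) (D j) s0"
    using less by metis
  define a where "a s j = moment_functional (mu s) (monom 1 n * ?P s j) /
    moment_functional (mu s) (?P s j * ?P s j)" for s j
  have "\<exists>d. ((\<lambda>s. a s j) has_real_derivative d) (at s0)" if j: "j < n" for j
  proof -
    have deg: "\<forall>\<^sub>F s in nhds s0. degree (monom 1 n * ?P s j) \<le> n + j"
        "\<forall>\<^sub>F s in nhds s0. degree (?P s j * ?P s j) \<le> j + j"
      using eventually_degree_monic_op[of j]
      by (auto elim!: eventually_mono intro: order_trans[OF degree_mult_le] simp: degree_monom_eq)
    obtain x y where "((\<lambda>s. moment_functional (mu s) (monom 1 n * ?P s j)) has_real_derivative x) (at s0)"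
        "((\<lambda>s. moment_functional (mu s) (?P s j * ?P s j)) has_real_derivative y) (at s0)"
      using differentiable_moment_functional[OF has_coeff_derivative_mult[OF has_coeff_derivative_const D[OF j]] deg(1)]
        differentiable_moment_functional[OF has_coeff_derivative_mult[OF D[OF j] D[OF j]] deg(2)]
      by blast
    moreover have "moment_functional (mu s0) (?P s0 j * ?P s0 j) \<noteq> 0"
      using monic_op_norm_pos[OF pos_def, of j] by simp
    ultimately show ?thesis unfolding a_def using DERIV_divide by blast
  qed
  then obtain a' where a': "\<And>j. j < n \<Longrightarrow> ((\<lambda>s. a s j) has_real_derivative a' j) (at s0)"
    by metis
  have "has_coeff_derivative (\<lambda>s. monom 1 n - (\<Sum>j<n. Polynomial.smult (a s j) (?P s j)))
     (0 - (\<Sum>j<n. Polynomial.smult (a' j) (?P s0 j) + Polynomial.smult (a s0 j) (D j))) s0"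
    (is "has_coeff_derivative _ ?P' s0")
    by (intro has_coeff_derivative_diff has_coeff_derivative_const has_coeff_derivative_sum
        has_coeff_derivative_smult a' D) auto
  moreover have "\<forall>\<^sub>F s in nhds s0. monom 1 n - (\<Sum>j<n. Polynomial.smult (a s j) (?P s j)) = ?P s n"
    using eventually_pos_def
  proof eventually_elim
    case (elim s)
    show ?case using conjunct2[OF monic_op_eq_gram_schmidt[OF elim, of n]] by (simp add: a_def)
  qed
  ultimately have "has_coeff_derivative (\<lambda>s. ?P s n) ?P' s0"
    by (rule has_coeff_derivative_cong_ev[rotated])
  then show ?case by blast
qed

definition monic_op_deriv :: "nat \<Rightarrow> real poly" where
  "monic_op_deriv n = (SOME P'. has_coeff_derivative (\<lambda>s. monic_op (mu s) n) P' s0)"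

lemma has_coeff_derivative_monic_op: "has_coeff_derivative (\<lambda>s. monic_op (mu s) n) (monic_op_deriv n) s0"
  unfolding monic_op_deriv_def using ex_has_coeff_derivative_monic_op by (rule someI_ex)

lemma coeff_monic_op_deriv: "i \<ge> n \<Longrightarrow> coeff (monic_op_deriv n) i = 0"
proof -
  assume "i \<ge> n"
  have "\<forall>\<^sub>F s in nhds s0. coeff (monic_op (mu s) n) i = (if i = n then 1 else 0)"
    using eventually_pos_def
    by eventually_elim (use \<open>i \<ge> n\<close> in \<open>auto simp: coeff_monic_op_degree degree_monic_op intro: coeff_eq_0\<close>)
  then show ?thesis by (rule coeff_eq_0_if_has_coeff_derivative_const[OF _ has_coeff_derivative_monic_op])
qed

lemma degree_monic_op_deriv: "n > 0 \<Longrightarrow> degree (monic_op_deriv n) < n"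
  using degree_le[of "n - 1" "monic_op_deriv n"] coeff_monic_op_deriv by fastforce

lemma moment_functional_monic_op_deriv_mult:
  assumes q: "degree q < n"
  shows "moment_functional (mu s0) (monic_op_deriv n * q) = c * poly (monic_op (mu s0) n) s0 * poly q s0"
proof -
  have "\<forall>\<^sub>F s in nhds s0. degree (monic_op (mu s) n * q) \<le> n + degree q"
    using eventually_degree_monic_op[of n] by (auto elim!: eventually_mono intro: order_trans[OF degree_mult_le])
  from has_real_derivative_moment_functional[OF has_coeff_derivative_mult[OF has_coeff_derivative_monic_op has_coeff_derivative_const] this]
  have D: "((\<lambda>s. moment_functional (mu s) (monic_op (mu s) n * q)) has_real_derivative
      moment_functional (mu s0) (monic_op_deriv n * q) - c * poly (monic_op (mu s0) n * q) s0) (at s0)"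
    by simp
  have "\<forall>\<^sub>F s in nhds s0. moment_functional (mu s) (monic_op (mu s) n * q) = 0"
    using eventually_pos_def by eventually_elim (rule moment_functional_monic_op_orthogonal[OF _ q])
  from DERIV_cong_ev[OF refl this refl, of 0]
  have "((\<lambda>s. moment_functional (mu s) (monic_op (mu s) n * q)) has_real_derivative 0) (at s0)"
    by simp
  from DERIV_unique[OF D this] show ?thesis by simp
qed

lemma has_real_derivative_norm_monic_op:
  "((\<lambda>s. moment_functional (mu s) (monic_op (mu s) n * monic_op (mu s) n)) has_real_derivative
     - (c * (poly (monic_op (mu s0) n) s0)\<^sup>2)) (at s0)"
proof -
  have "\<forall>\<^sub>F s in nhds s0. degree (monic_op (mu s) n * monic_op (mu s) n) \<le> n + n"
    using eventually_degree_monic_op[of n] by (auto elim!: eventually_mono intro: order_trans[OF degree_mult_le])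
  note D = has_real_derivative_moment_functional[OF has_coeff_derivative_mult[OF
        has_coeff_derivative_monic_op has_coeff_derivative_monic_op] this]
  have "monic_op_deriv 0 = 0" by (rule poly_eqI) (simp add: coeff_monic_op_deriv)
  then have "moment_functional (mu s0) (monic_op (mu s0) n * monic_op_deriv n) = 0"
    using moment_functional_monic_op_orthogonal[OF pos_def degree_monic_op_deriv, of n] by (cases "n = 0") auto
  then show ?thesis
    using D[unfolded moment_functional_add] by (simp add: mult.commute[of "monic_op_deriv n"] power2_eq_square)
qed

text \<open>The derivative \<open>P_n'\<close> in \<open>s\<close> has degree \<open>< n\<close>, so its coefficient of \<open>x^(n-1)\<close> is
  \<open>L(P_n' P_(n-1)) / h_(n-1)\<close>.\<close>
lemma has_real_derivative_subleading_coeff: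
  assumes n: "n \<ge> 1"
  shows "((\<lambda>s. subleading_coeff (mu s) n) has_real_derivative
     c * poly (monic_op (mu s0) n) s0 * poly (monic_op (mu s0) (n - 1)) s0 /
     moment_functional (mu s0) (monic_op (mu s0) (n - 1) * monic_op (mu s0) (n - 1))) (at s0)"
proof -
  let ?P = "monic_op (mu s0)"
  have "degree (monic_op_deriv n) \<le> n - 1" using degree_monic_op_deriv[of n] n by linarith
  then have "coeff (monic_op_deriv n) (n - 1) * moment_functional (mu s0) (?P (n - 1) * ?P (n - 1)) =
      c * poly (?P n) s0 * poly (?P (n - 1)) s0"
    using moment_functional_monic_op_mult[OF pos_def, of "monic_op_deriv n" "n - 1"]
      moment_functional_monic_op_deriv_mult[of "?P (n - 1)" n] n
    by (simp add: degree_monic_op[OF pos_def] mult.commute[of "monic_op_deriv n"])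
  then have "coeff (monic_op_deriv n) (n - 1) =
      c * poly (?P n) s0 * poly (?P (n - 1)) s0 / moment_functional (mu s0) (?P (n - 1) * ?P (n - 1))"
    using monic_op_norm_pos[OF pos_def, of "n - 1"] by (simp add: eq_divide_eq)
  with has_coeff_derivative_monic_op[of n] show ?thesis
    unfolding subleading_coeff_eq[OF n] has_coeff_derivative_def by metis
qed

lemma differentiable_poly_monic_op:
  assumes "(x has_real_derivative x') (at s0)"
  shows "\<exists>D. ((\<lambda>s. poly (monic_op (mu s) n) (x s)) has_real_derivative D) (at s0)"
  using eventually_degree_monic_op[of n]
  by (intro differentiable_poly_if_has_coeff_derivative[OF _ has_coeff_derivative_monic_op assms])
    (auto elim: eventually_mono)

end

section \<open>The Laguerre weight with jumps\<close>

definition w0_tail_moment :: "real \<Rightarrow> nat \<Rightarrow> real \<Rightarrow> real" where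
  "w0_tail_moment \<alpha> i c = (LINT x:{c<..}|lborel. x ^ i * w0 \<alpha> x)"

lemma pow_mult_w0_eq: "x \<ge> 0 \<Longrightarrow> x ^ i * w0 \<alpha> x = x powr (real i + \<alpha>) * exp (- x)"
  by (cases "x = 0") (simp_all add: w0_def powr_add powr_realpow)

lemma set_integrable_pow_mult_w0:
  assumes "\<alpha> > -1" and "A \<in> sets lborel" and "A \<subseteq> {0..}"
  shows "set_integrable lborel A (\<lambda>x. x ^ i * w0 \<alpha> x)"
proof (rule set_integrable_subset[OF _ assms(2,3)])
  define s where "s = real i + \<alpha> + 1"
  have "s > 0" using assms(1) unfolding s_def by simp
  have "integrable lborel (\<lambda>x. indicator {0..} x * x powr (s - 1) / exp x)"
  proof (rule integrableI_nonneg)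
    show "(\<integral>\<^sup>+ x. ennreal (indicator {0..} x * x powr (s - 1) / exp x) \<partial>lborel) < \<infinity>"
      using Gamma_conv_nn_integral_real[OF \<open>s > 0\<close>, symmetric] by simp
  qed (auto simp: indicator_def)
  moreover have "indicator {0..} x * x powr (s - 1) / exp x = indicator {0..} x *\<^sub>R (x ^ i * w0 \<alpha> x)"
    for x :: real
    by (cases "x \<ge> 0") (auto simp: pow_mult_w0_eq s_def indicator_def exp_minus divide_inverse add_ac)
  ultimately show "set_integrable lborel {0..} (\<lambda>x. x ^ i * w0 \<alpha> x)"
    unfolding set_integrable_def by simp
qed

lemma set_integrable_poly_mult_w0:
  assumes "\<alpha> > -1" and "A \<in> sets lborel" and "A \<subseteq> {0..}"
  shows "set_integrable lborel A (\<lambda>x. poly q x * w0 \<alpha> x)"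
proof -
  have "set_integrable lborel A (\<lambda>x. coeff q i * (x ^ i * w0 \<alpha> x))" for i
    by (intro set_integrable_mult_right set_integrable_pow_mult_w0 assms)
  then have "integrable lborel (\<lambda>x. \<Sum>i\<le>degree q. indicator A x *\<^sub>R (coeff q i * (x ^ i * w0 \<alpha> x)))"
    unfolding set_integrable_def by (intro Bochner_Integration.integrable_sum) auto
  then show ?thesis
    unfolding set_integrable_def by (simp add: poly_altdef sum_distrib_left sum_distrib_right mult_ac)
qed

lemma has_real_derivative_w0_antiderivative:
  assumes "x > 0"
  shows "((\<lambda>x. - (x powr (real i + 1 + \<alpha>) * exp (- x))) has_real_derivative
           x ^ Suc i * w0 \<alpha> x - (real i + 1 + \<alpha>) * (x ^ i * w0 \<alpha> x)) (at x)"
proof -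
  have "((\<lambda>x. - (x powr (real i + 1 + \<alpha>) * exp (- x))) has_real_derivative
      - ((real i + 1 + \<alpha>) * x powr (real i + \<alpha>) * exp (- x) - x powr (real i + 1 + \<alpha>) * exp (- x))) (at x)"
    using assms by (auto intro!: derivative_eq_intros simp: add.assoc)
  moreover have "x powr (real i + 1 + \<alpha>) = x * x powr (real i + \<alpha>)"
    using assms by (simp add: powr_add add_ac)
  ultimately show ?thesis
    using pow_mult_w0_eq[of x i \<alpha>] pow_mult_w0_eq[of x "Suc i" \<alpha>] assms
    by (simp add: algebra_simps)
qed

lemma tendsto_powr_mult_exp_at_right:
  fixes a c :: real
  assumes "c \<ge> 0" and "a > 0"
  shows "((\<lambda>x. x powr a * exp (- x)) \<longlongrightarrow> c powr a * exp (- c)) (at_right c)"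
proof (cases "c = 0")
  case True
  have "((\<lambda>x. x powr a * exp (- x)) \<longlongrightarrow> 0 * exp (- 0)) (at_right 0)"
    by (intro tendsto_intros tendsto_zero_powrI)
      (use assms eventually_at_right_less[of "0::real"] in \<open>auto elim: eventually_mono\<close>)
  then show ?thesis using True by simp
next
  case False
  then have "isCont (\<lambda>x. x powr a * exp (- x)) c" using assms by (auto intro!: continuous_intros)
  then show ?thesis by (simp add: isCont_def filterlim_at_split)
qed

text \<open>Integration by parts; at \<open>c = 0\<close> the boundary term vanishes because \<open>\<alpha> > -1\<close>.\<close>
lemma w0_tail_moment_Suc:
  assumes a: "\<alpha> > -1" and c: "c \<ge> 0"
  shows "w0_tail_moment \<alpha> (Suc i) c = (real i + 1 + \<alpha>) * w0_tail_moment \<alpha> i c + c ^ Suc i * w0 \<alpha> c"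
proof -
  define f :: "real \<Rightarrow> real" where "f = (\<lambda>x. x ^ Suc i * w0 \<alpha> x - (real i + 1 + \<alpha>) * (x ^ i * w0 \<alpha> x))"
  define F :: "real \<Rightarrow> real" where "F = (\<lambda>x. - (x powr (real i + 1 + \<alpha>) * exp (- x)))"
  have integrable: "set_integrable lborel {c<..} (\<lambda>x. x ^ j * w0 \<alpha> x)" for j
    using c by (intro set_integrable_pow_mult_w0 a) auto
  have "(LBINT x=ereal c..\<infinity>. f x) = 0 - F c"
  proof (rule interval_integral_FTC_integrable)
    fix x assume "ereal c < ereal x"
    then have "x > 0" using c by simp
    then show "(F has_vector_derivative f x) (at x)"
      using has_real_derivative_w0_antiderivative[of x i \<alpha>]
      by (simp add: F_def f_def has_real_derivative_iff_has_vector_derivative)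
    show "isCont f x"
      unfolding f_def w0_def using \<open>x > 0\<close> by (auto intro!: continuous_intros)
  next
    have "einterval (ereal c) \<infinity> = {c<..}" by (auto simp: einterval_def)
    then show "set_integrable lborel (einterval (ereal c) \<infinity>) f"
      unfolding f_def using integrable[of "Suc i"] integrable[of i]
      by (simp add: set_integral_diff set_integrable_mult_right del: power_Suc)
  next
    show "((F \<circ> real_of_ereal) \<longlongrightarrow> F c) (at_right (ereal c))"
      unfolding ereal_tendsto_simps F_def using a
      by (intro tendsto_minus tendsto_powr_mult_exp_at_right c) simp
  next
    show "((F \<circ> real_of_ereal) \<longlongrightarrow> 0) (at_left \<infinity>)"
      unfolding ereal_tendsto_simps F_def by real_asymp
  qed simp
  moreover have "(LBINT x=ereal c..\<infinity>. f x) =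
      w0_tail_moment \<alpha> (Suc i) c - (real i + 1 + \<alpha>) * w0_tail_moment \<alpha> i c"
    unfolding interval_integral_Ioi[of "ereal c", simplified] f_def w0_tail_moment_def
    using integrable by (simp add: set_integral_diff set_integrable_mult_right set_integral_mult_right del: power_Suc)
  ultimately show ?thesis
    using pow_mult_w0_eq[OF c, of "Suc i" \<alpha>] by (simp add: F_def add_ac)
qed

lemma w0_tail_moment_has_real_derivative:
  assumes a: "\<alpha> > -1" and c0: "c0 > 0"
  shows "(w0_tail_moment \<alpha> i has_real_derivative - (c0 ^ i * w0 \<alpha> c0)) (at c0)"
proof -
  define g where "g x = x ^ i * w0 \<alpha> x" for x :: real
  define lo where "lo = c0 / 2"
  define hi where "hi = 2 * c0"
  have lo: "0 < lo" "lo < c0" "c0 < hi" using c0 by (auto simp: lo_def hi_def)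
  have "continuous_on {lo..hi} g"
    unfolding g_def w0_def using lo by (intro continuous_intros) auto
  have "((\<lambda>u. LBINT y=ereal lo..ereal u. g y) has_vector_derivative g c0) (at c0 within {lo..hi})"
    by (rule interval_integral_FTC2) (use lo \<open>continuous_on {lo..hi} g\<close> in auto)
  then have D: "((\<lambda>u. LBINT y=ereal lo..ereal u. g y) has_real_derivative g c0) (at c0)"
    using at_within_Icc_at[of lo c0 hi] lo by (simp add: has_real_derivative_iff_has_vector_derivative)
  have "w0_tail_moment \<alpha> i c = w0_tail_moment \<alpha> i lo - (LBINT x=ereal lo..ereal c. g x)" if "lo < c" for c
  proof -
    have "set_integrable lborel {lo<..} g"
      unfolding g_def using lo by (intro set_integrable_pow_mult_w0 a) auto
    then have "interval_lebesgue_integrable lborel (ereal lo) \<infinity> g"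
      by (simp add: interval_lebesgue_integrable_def einterval_def greaterThan_def)
    from interval_integral_sum[of "ereal lo" "ereal c" \<infinity> g] this \<open>lo < c\<close> show ?thesis
      by (simp add: w0_tail_moment_def interval_integral_Ioi g_def[abs_def] interval_lebesgue_integrable_def
          einterval_def min_def max_def greaterThan_def)
  qed
  then have "\<forall>\<^sub>F u in nhds c0. w0_tail_moment \<alpha> i u = w0_tail_moment \<alpha> i lo - (LBINT y=ereal lo..ereal u. g y)"
    using lo by (intro eventually_mono[OF eventually_nhds_in_open[of "{lo<..}" c0]]) auto
  moreover have "((\<lambda>u. w0_tail_moment \<alpha> i lo - (LBINT y=ereal lo..ereal u. g y)) has_real_derivative - g c0) (at c0)"
    using DERIV_diff[OF DERIV_const D] by simp
  ultimately show ?thesis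
    by (subst DERIV_cong_ev[OF refl _ refl]) (auto simp: g_def)
qed

definition admissible_nodes :: "nat \<Rightarrow> (nat \<Rightarrow> real) \<Rightarrow> bool" where
  "admissible_nodes m t \<longleftrightarrow> 0 < t 1 \<and> (\<forall>j\<in>{1..<m}. t j < t (Suc j))"

lemma admissible_nodes_less:
  assumes t: "admissible_nodes m t" and "1 \<le> i" "i < j" "j \<le> m"
  shows "t i < t j"
  using assms(2-)
proof (induction j)
  case (Suc j)
  have "t j < t (Suc j)" using t Suc.prems by (auto simp: admissible_nodes_def)
  with Suc show ?case by (cases "i = j") auto
qed simp

lemma admissible_nodes_le:
  "admissible_nodes m t \<Longrightarrow> 1 \<le> i \<Longrightarrow> i \<le> j \<Longrightarrow> j \<le> m \<Longrightarrow> t i \<le> t j"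
  using admissible_nodes_less[of m t i j] by (cases "i = j") auto

lemma admissible_nodes_pos: "admissible_nodes m t \<Longrightarrow> l \<in> {1..m} \<Longrightarrow> t l > 0"
  using admissible_nodes_le[of m t 1 l] by (auto simp: admissible_nodes_def)

lemma admissible_nodes_nonneg: "admissible_nodes m t \<Longrightarrow> \<forall>l\<in>{1..m}. t l \<ge> 0"
  using admissible_nodes_pos by (auto intro: less_imp_le)

lemma eventually_admissible_nodes_upd:
  assumes t: "admissible_nodes m t" and k: "k \<in> {1..m}"
  shows "\<forall>\<^sub>F s in nhds (t k). admissible_nodes m (t(k := s))"
proof -
  have above: "\<forall>\<^sub>F s in nhds (t k). a < s" if "a < t k" for a
    using that eventually_nhds_in_open[of "{a<..}" "t k"] by auto
  have below: "\<forall>\<^sub>F s in nhds (t k). s < b" if "t k < b" for b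
    using that eventually_nhds_in_open[of "{..<b}" "t k"] by auto
  have "\<forall>\<^sub>F s in nhds (t k). 0 < (t(k := s)) 1"
    using t above[OF admissible_nodes_pos[OF t k]] by (cases "k = 1") (auto simp: admissible_nodes_def)
  moreover have "\<forall>\<^sub>F s in nhds (t k). (t(k := s)) j < (t(k := s)) (Suc j)" if j: "j \<in> {1..<m}" for j
  proof -
    have "t j < t (Suc j)" using t j by (simp add: admissible_nodes_def)
    then show ?thesis
      using above[of "t j"] below[of "t (Suc j)"] by (cases "j = k"; cases "Suc j = k") auto
  qed
  then have "\<forall>\<^sub>F s in nhds (t k). \<forall>j\<in>{1..<m}. (t(k := s)) j < (t(k := s)) (Suc j)"
    by (intro eventually_ball_finite) auto
  ultimately show ?thesis
    unfolding admissible_nodes_def by (rule eventually_conj)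
qed

lemma step_factor_eq_partial_sum:
  assumes t: "admissible_nodes m t" and l: "l \<le> m"
    and lo: "l = 0 \<or> t l \<le> x" and hi: "l = m \<or> x < t (Suc l)"
  shows "\<omega> 0 + (\<Sum>k=1..m. \<omega> k * heaviside (x - t k)) = (\<Sum>i\<le>l. \<omega> i)"
proof -
  have "heaviside (x - t k) = 1" if "k \<in> {1..l}" for k
    using admissible_nodes_le[OF t, of k l] that l lo by (auto simp: heaviside_def)
  moreover have "heaviside (x - t k) = 0" if "k \<in> {Suc l..m}" for k
    using admissible_nodes_le[OF t, of "Suc l" k] that hi by (auto simp: heaviside_def)
  moreover have "{1..m} = {1..l} \<union> {Suc l..m}" using l by auto
  ultimately have "(\<Sum>k=1..m. \<omega> k * heaviside (x - t k)) = (\<Sum>k=1..l. \<omega> k)"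
    by (simp add: sum.union_disjoint)
  then show ?thesis
    by (simp add: atMost_atLeast0 sum.atLeast_Suc_atMost[symmetric])
qed

lemma step_factor_nonneg:
  assumes t: "admissible_nodes m t" and \<omega>: "\<forall>l\<le>m. (\<Sum>i\<le>l. \<omega> i) \<ge> 0"
  shows "\<omega> 0 + (\<Sum>k=1..m. \<omega> k * heaviside (x - t k)) \<ge> 0"
proof -
  define l where "l = Max {l. l \<le> m \<and> (l = 0 \<or> t l \<le> x)}"
  have fin: "finite {l. l \<le> m \<and> (l = 0 \<or> t l \<le> x)}" by simp
  have l: "l \<le> m" "l = 0 \<or> t l \<le> x"
    using Max_in[OF fin, of] unfolding l_def[symmetric] by auto
  have "l = m \<or> x < t (Suc l)"
    using Max_ge[OF fin, of "Suc l"] l unfolding l_def[symmetric] by force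
  then show ?thesis
    using step_factor_eq_partial_sum[OF t l] \<omega> l(1) by simp
qed

lemma integral_indicator_atLeast_pow_mult_w0:
  assumes a: "\<alpha> > -1" and c: "c \<ge> 0"
  shows "(LINT x|lborel. indicator {c..} x * (x ^ j * w0 \<alpha> x)) = w0_tail_moment \<alpha> j c"
proof -
  have integrable: "integrable lborel (\<lambda>x. indicator A x * (x ^ j * w0 \<alpha> x))"
    if "A \<in> {{c..}, {c<..}}" for A
  proof -
    have "A \<subseteq> {0..}" using that c by auto
    then show ?thesis
      using set_integrable_pow_mult_w0[OF a, of A j] that by (auto simp: set_integrable_def)
  qed
  have "AE x in lborel. indicator {c..} x * (x ^ j * w0 \<alpha> x) = indicator {c<..} x * (x ^ j * w0 \<alpha> x)"
    using AE_lborel_singleton[of c] by eventually_elim (auto simp: indicator_def)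
  then have "(LINT x|lborel. indicator {c..} x * (x ^ j * w0 \<alpha> x)) =
      (LINT x|lborel. indicator {c<..} x * (x ^ j * w0 \<alpha> x))"
    by (rule integral_cong_AE[rotated 2]) (use integrable in \<open>auto intro: borel_measurable_integrable\<close>)
  then show ?thesis
    by (simp add: w0_tail_moment_def set_lebesgue_integral_def)
qed

lemma indicator_mult_pow_mult_wgt:
  assumes t: "\<forall>l\<in>{1..m}. t l \<ge> 0"
  shows "indicator {0..} x * (x ^ j * wgt \<alpha> m \<omega> t x) =
    \<omega> 0 * (indicator {0..} x * (x ^ j * w0 \<alpha> x)) +
    (\<Sum>l=1..m. \<omega> l * (indicator {t l..} x * (x ^ j * w0 \<alpha> x)))"
proof (cases "x \<ge> 0")
  case True
  have "heaviside (x - t l) = indicator {t l..} x" for l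
    by (simp add: heaviside_def indicator_def)
  then have "x ^ j * wgt \<alpha> m \<omega> t x = \<omega> 0 * (x ^ j * w0 \<alpha> x) +
      (\<Sum>l=1..m. \<omega> l * (indicator {t l..} x * (x ^ j * w0 \<alpha> x)))"
    unfolding wgt_def distrib_left sum_distrib_left by (intro arg_cong2[where f="(+)"] sum.cong) simp_all
  then show ?thesis using True by simp
next
  case False
  then have "\<forall>l\<in>{1..m}. indicator {t l..} x = (0::real)" using t by (auto simp: indicator_def)
  then show ?thesis using False by (simp add: indicator_def)
qed

lemma
  assumes a: "\<alpha> > -1" and t: "\<forall>l\<in>{1..m}. t l \<ge> 0"
  shows integrable_indicator_pow_mult_wgt:
      "integrable lborel (\<lambda>x. indicator {0..} x * (x ^ j * wgt \<alpha> m \<omega> t x))"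
    and moment_eq_w0_tail_moments:
      "moment \<alpha> m \<omega> t j = \<omega> 0 * w0_tail_moment \<alpha> j 0 + (\<Sum>l=1..m. \<omega> l * w0_tail_moment \<alpha> j (t l))"
proof -
  have integrable: "integrable lborel (\<lambda>x. indicator {c..} x * (x ^ j * w0 \<alpha> x))" if "c \<ge> 0" for c
    using set_integrable_pow_mult_w0[OF a, of "{c..}" j] that by (simp add: set_integrable_def)
  note decomp = indicator_mult_pow_mult_wgt[OF t, abs_def]
  show "integrable lborel (\<lambda>x. indicator {0..} x * (x ^ j * wgt \<alpha> m \<omega> t x))"
    unfolding decomp using t by (intro Bochner_Integration.integrable_add
      Bochner_Integration.integrable_sum integrable_mult_right integrable) auto
  have "moment \<alpha> m \<omega> t j = (LINT x|lborel. indicator {0..} x * (x ^ j * wgt \<alpha> m \<omega> t x))"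
    by (simp add: moment_def set_lebesgue_integral_def)
  also have "\<dots> = \<omega> 0 * (LINT x|lborel. indicator {0..} x * (x ^ j * w0 \<alpha> x)) +
      (\<Sum>l=1..m. \<omega> l * (LINT x|lborel. indicator {t l..} x * (x ^ j * w0 \<alpha> x)))"
    unfolding decomp using t integrable
    by (subst Bochner_Integration.integral_add Bochner_Integration.integral_sum; auto)+
  also have "\<dots> = \<omega> 0 * w0_tail_moment \<alpha> j 0 + (\<Sum>l=1..m. \<omega> l * w0_tail_moment \<alpha> j (t l))"
    using t by (simp add: integral_indicator_atLeast_pow_mult_w0[OF a])
  finally show "moment \<alpha> m \<omega> t j = \<omega> 0 * w0_tail_moment \<alpha> j 0 + (\<Sum>l=1..m. \<omega> l * w0_tail_moment \<alpha> j (t l))" .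
qed

lemma
  assumes a: "\<alpha> > -1" and t: "\<forall>l\<in>{1..m}. t l \<ge> 0"
  shows set_integrable_poly_mult_wgt: "set_integrable lborel {0..} (\<lambda>x. poly q x * wgt \<alpha> m \<omega> t x)"
    and set_integral_poly_mult_wgt:
      "(LINT x:{0..}|lborel. poly q x * wgt \<alpha> m \<omega> t x) = moment_functional (moment \<alpha> m \<omega> t) q"
proof -
  have sum: "(\<lambda>x. indicator {0..} x *\<^sub>R (poly q x * wgt \<alpha> m \<omega> t x)) =
     (\<lambda>x. \<Sum>i\<le>degree q. coeff q i * (indicator {0..} x * (x ^ i * wgt \<alpha> m \<omega> t x)))"
    by (simp add: fun_eq_iff poly_altdef sum_distrib_left sum_distrib_right algebra_simps)
  have integrable: "integrable lborel (\<lambda>x. coeff q i * (indicator {0..} x * (x ^ i * wgt \<alpha> m \<omega> t x)))" for i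
    using integrable_indicator_pow_mult_wgt[OF a t] by simp
  then show "set_integrable lborel {0..} (\<lambda>x. poly q x * wgt \<alpha> m \<omega> t x)"
    unfolding set_integrable_def sum by (intro Bochner_Integration.integrable_sum)
  show "(LINT x:{0..}|lborel. poly q x * wgt \<alpha> m \<omega> t x) = moment_functional (moment \<alpha> m \<omega> t) q"
    unfolding set_lebesgue_integral_def sum moment_functional_def
    by (simp add: Bochner_Integration.integral_sum[OF integrable] moment_def set_lebesgue_integral_def)
qed

lemma set_integral_subset_le:
  fixes f :: "_ \<Rightarrow> real"
  assumes f: "set_integrable M A f" and "B \<in> sets M" "B \<subseteq> A" and nonneg: "\<And>x. x \<in> A \<Longrightarrow> 0 \<le> f x"
  shows "(LINT x:B|M. f x) \<le> (LINT x:A|M. f x)"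
proof -
  have "set_integrable M B f" by (rule set_integrable_subset[OF f assms(2,3)])
  then show ?thesis
    using f \<open>B \<subseteq> A\<close> nonneg unfolding set_integrable_def set_lebesgue_integral_def
    by (intro integral_mono) (auto simp: indicator_def)
qed

lemma set_integral_poly_sq_mult_w0_pos:
  assumes a: "\<alpha> > -1" and p: "p \<noteq> 0" and "0 \<le> lo" "lo < hi"
  shows "(LINT x:{lo<..<hi}|lborel. poly (p * p) x * w0 \<alpha> x) > 0"
proof (rule ccontr)
  define g where "g = (\<lambda>x. indicator {lo<..<hi} x * (poly (p * p) x * w0 \<alpha> x))"
  have g_nonneg: "g x \<ge> 0" for x
    using \<open>0 \<le> lo\<close> by (auto simp: g_def indicator_def w0_def intro!: mult_nonneg_nonneg)
  have "{lo<..<hi} \<subseteq> {0..}" using \<open>0 \<le> lo\<close> by auto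
  then have "integrable lborel g"
    using set_integrable_poly_mult_w0[OF a, of "{lo<..<hi}" "p * p"] by (simp add: g_def set_integrable_def)
  moreover assume "\<not> (LINT x:{lo<..<hi}|lborel. poly (p * p) x * w0 \<alpha> x) > 0"
  then have "integral\<^sup>L lborel g = 0"
    using integral_nonneg_AE[of g lborel] g_nonneg by (simp add: g_def set_lebesgue_integral_def)
  ultimately have "AE x in lborel. g x = 0"
    using integral_nonneg_eq_0_iff_AE g_nonneg by blast
  moreover have "AE x in lborel. \<forall>r\<in>{x. poly p x = 0}. x \<noteq> r"
    using poly_roots_finite[OF p] by (rule AE_finite_allI) (simp add: AE_lborel_singleton)
  ultimately have "AE x in lborel. x \<notin> {lo<..<hi}"
    by eventually_elim (use \<open>0 \<le> lo\<close> in \<open>auto simp: g_def w0_def\<close>)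
  then have "emeasure lborel {lo<..<hi} = 0"
    by (subst (asm) AE_iff_measurable[of "{lo<..<hi}"]) auto
  with \<open>lo < hi\<close> show False by simp
qed

lemma wgt_eq_on_interval:
  assumes t: "admissible_nodes m t" and "l \<le> m"
  obtains lo hi where "0 \<le> lo" "lo < hi"
    "\<And>x. x \<in> {lo<..<hi} \<Longrightarrow> wgt \<alpha> m \<omega> t x = (\<Sum>i\<le>l. \<omega> i) * w0 \<alpha> x"
proof -
  define lo where "lo = (if l = 0 then 0 else t l)"
  define hi where "hi = (if l = m then lo + 1 else t (Suc l))"
  have "0 \<le> lo" using admissible_nodes_nonneg[OF t] \<open>l \<le> m\<close> by (auto simp: lo_def)
  moreover have "lo < hi"
    using \<open>l \<le> m\<close> admissible_nodes_less[OF t, of l "Suc l"] admissible_nodes_pos[OF t, of 1]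
    by (auto simp: lo_def hi_def)
  moreover have "wgt \<alpha> m \<omega> t x = (\<Sum>i\<le>l. \<omega> i) * w0 \<alpha> x" if "x \<in> {lo<..<hi}" for x
    using step_factor_eq_partial_sum[OF t \<open>l \<le> m\<close>, of x \<omega>] that
    by (auto simp: wgt_def lo_def hi_def split: if_splits)
  ultimately show ?thesis using that by blast
qed

lemma pos_def_moments_wgt:
  assumes a: "\<alpha> > -1" and t: "admissible_nodes m t"
    and \<omega>: "\<forall>l\<le>m. (\<Sum>i\<le>l. \<omega> i) \<ge> 0" and \<omega>_pos: "\<exists>l\<le>m. (\<Sum>i\<le>l. \<omega> i) > 0"
  shows "pos_def_moments (moment \<alpha> m \<omega> t)"
  unfolding pos_def_moments_def
proof (intro allI impI)
  fix p :: "real poly" assume p: "p \<noteq> 0"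
  obtain l where l: "l \<le> m" "(\<Sum>i\<le>l. \<omega> i) > 0" using \<omega>_pos by blast
  obtain lo hi where lo_hi: "0 \<le> lo" "lo < hi"
    and wgt_eq: "\<And>x. x \<in> {lo<..<hi} \<Longrightarrow> wgt \<alpha> m \<omega> t x = (\<Sum>i\<le>l. \<omega> i) * w0 \<alpha> x"
    using wgt_eq_on_interval[OF t l(1)] by blast
  have t_nonneg: "\<forall>l\<in>{1..m}. t l \<ge> 0" by (rule admissible_nodes_nonneg[OF t])
  have "0 < (\<Sum>i\<le>l. \<omega> i) * (LINT x:{lo<..<hi}|lborel. poly (p * p) x * w0 \<alpha> x)"
    using set_integral_poly_sq_mult_w0_pos[OF a p lo_hi] l(2) by simp
  also have "\<dots> = (LINT x:{lo<..<hi}|lborel. poly (p * p) x * wgt \<alpha> m \<omega> t x)"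
    by (auto simp: wgt_eq mult_ac set_integral_mult_right[symmetric] intro!: set_lebesgue_integral_cong)
  also have "\<dots> \<le> (LINT x:{0..}|lborel. poly (p * p) x * wgt \<alpha> m \<omega> t x)"
  proof (rule set_integral_subset_le[OF set_integrable_poly_mult_wgt[OF a t_nonneg]])
    fix x :: real assume "x \<in> {0..}"
    then show "0 \<le> poly (p * p) x * wgt \<alpha> m \<omega> t x"
      using step_factor_nonneg[OF t \<omega>, of x] by (simp add: wgt_def w0_def)
  qed (use lo_hi in auto)
  also have "\<dots> = moment_functional (moment \<alpha> m \<omega> t) (p * p)"
    by (rule set_integral_poly_mult_wgt[OF a t_nonneg])
  finally show "moment_functional (moment \<alpha> m \<omega> t) (p * p) > 0" .
qed

lemma moment_Suc:
  assumes a: "\<alpha> > -1" and t: "\<forall>l\<in>{1..m}. t l \<ge> 0"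
  shows "moment \<alpha> m \<omega> t (Suc i) = (real i + 1 + \<alpha>) * moment \<alpha> m \<omega> t i +
           (\<Sum>l=1..m. \<omega> l * t l ^ Suc i * w0 \<alpha> (t l))"
proof -
  have "moment \<alpha> m \<omega> t (Suc i) = \<omega> 0 * ((real i + 1 + \<alpha>) * w0_tail_moment \<alpha> i 0) +
      (\<Sum>l=1..m. \<omega> l * ((real i + 1 + \<alpha>) * w0_tail_moment \<alpha> i (t l) + t l ^ Suc i * w0 \<alpha> (t l)))"
    using t by (simp add: moment_eq_w0_tail_moments[OF a t] w0_tail_moment_Suc[OF a] del: power_Suc)
  also have "\<dots> = (real i + 1 + \<alpha>) * (\<omega> 0 * w0_tail_moment \<alpha> i 0 + (\<Sum>l=1..m. \<omega> l * w0_tail_moment \<alpha> i (t l))) +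
      (\<Sum>l=1..m. \<omega> l * t l ^ Suc i * w0 \<alpha> (t l))"
    by (simp add: algebra_simps sum.distrib sum_distrib_left del: power_Suc)
  finally show ?thesis by (simp add: moment_eq_w0_tail_moments[OF a t] del: power_Suc)
qed

definition jump_term :: "real \<Rightarrow> nat \<Rightarrow> (nat \<Rightarrow> real) \<Rightarrow> (nat \<Rightarrow> real) \<Rightarrow> real poly \<Rightarrow> real" where
  "jump_term \<alpha> m \<omega> t q = (\<Sum>l=1..m. \<omega> l * w0 \<alpha> (t l) * t l * poly q (t l))"

lemma moment_functional_x_mult_wgt:
  fixes \<omega> :: "nat \<Rightarrow> real"
  assumes a: "\<alpha> > -1" and t: "\<forall>l\<in>{1..m}. t l \<ge> 0"
  defines "mu \<equiv> moment \<alpha> m \<omega> t"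
  shows "moment_functional mu (monom 1 1 * q) = (\<alpha> + 1) * moment_functional mu q +
    moment_functional mu (monom 1 1 * pderiv q) + jump_term \<alpha> m \<omega> t q"
proof -
  let ?d = "degree q"
  have "moment_functional mu (monom 1 1 * q) = (\<Sum>i\<le>Suc ?d. coeff (monom 1 1 * q) i * mu i)"
    by (rule moment_functional_eq_sum) (auto intro: order_trans[OF degree_mult_le] simp: degree_monom_eq)
  also have "\<dots> = (\<Sum>i\<le>?d. coeff q i * mu (Suc i))"
    by (subst sum.atMost_Suc_shift) (simp add: coeff_monom_mult)
  also have "\<dots> = (\<alpha> + 1) * (\<Sum>i\<le>?d. coeff q i * mu i) + (\<Sum>i\<le>?d. (of_nat i * coeff q i) * mu i)
      + (\<Sum>l=1..m. \<omega> l * w0 \<alpha> (t l) * t l * (\<Sum>i\<le>?d. coeff q i * t l ^ i))"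
    unfolding mu_def moment_Suc[OF a t]
    by (simp add: algebra_simps sum.distrib sum_distrib_left sum_distrib_right) (rule sum.swap)
  also have "(\<Sum>i\<le>?d. (of_nat i * coeff q i) * mu i) = moment_functional mu (monom 1 1 * pderiv q)"
    using moment_functional_eq_sum[OF degree_x_mult_pderiv_le] by (simp add: coeff_x_mult_pderiv)
  finally show ?thesis
    by (simp add: moment_functional_def jump_term_def poly_altdef)
qed

section \<open>Derivatives with respect to the jump points\<close>

lemma pd_eqI: "((\<lambda>s. F (t(k := s))) has_real_derivative D) (at (t k)) \<Longrightarrow> pd F k t = D"
  unfolding pd_def by (rule DERIV_imp_deriv)

locale jump_laguerre =
  fixes \<alpha> :: real and m :: nat and \<omega> :: "nat \<Rightarrow> real"
  assumes alpha_gt: "\<alpha> > -1"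
    and partial_sums_nonneg: "\<forall>l\<le>m. (\<Sum>i\<le>l. \<omega> i) \<ge> 0"
    and partial_sum_pos: "\<exists>l\<le>m. (\<Sum>i\<le>l. \<omega> i) > 0"
begin

lemma pos_def: "admissible_nodes m t \<Longrightarrow> pos_def_moments (moment \<alpha> m \<omega> t)"
  by (rule pos_def_moments_wgt[OF alpha_gt _ partial_sums_nonneg partial_sum_pos])

lemma pearson:
  assumes t: "admissible_nodes m t"
  shows "pearson_functional (moment \<alpha> m \<omega> t) \<alpha> (jump_term \<alpha> m \<omega> t)"
  by unfold_locales
    (rule pos_def[OF t], rule moment_functional_x_mult_wgt[OF alpha_gt admissible_nodes_nonneg[OF t]])

lemma opoly_eq_monic_op:
  assumes t: "admissible_nodes m t"
  shows "opoly \<alpha> m \<omega> t n = monic_op (moment \<alpha> m \<omega> t) n"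
proof -
  have "(LINT x:{0..}|lborel. poly p x * x ^ j * wgt \<alpha> m \<omega> t x) =
      moment_functional (moment \<alpha> m \<omega> t) (p * monom 1 j)" for p j
    using set_integral_poly_mult_wgt[OF alpha_gt admissible_nodes_nonneg[OF t], of "p * monom 1 j" \<omega>]
    by (simp add: poly_monom mult_ac)
  then have "(\<lambda>p. degree p = n \<and> lead_coeff p = 1 \<and>
     (\<forall>j<n. (LINT x:{0..}|lborel. poly p x * x ^ j * wgt \<alpha> m \<omega> t x) = 0)) = is_monic_op (moment \<alpha> m \<omega> t) n"
    by (auto simp: fun_eq_iff is_monic_op_iff_monomials)
  then show ?thesis by (simp add: opoly_def monic_op_def)
qed

lemma hnorm_eq:
  assumes t: "admissible_nodes m t"
  shows "hnorm \<alpha> m \<omega> t n =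
    moment_functional (moment \<alpha> m \<omega> t) (monic_op (moment \<alpha> m \<omega> t) n * monic_op (moment \<alpha> m \<omega> t) n)"
  using set_integral_poly_mult_wgt[OF alpha_gt admissible_nodes_nonneg[OF t],
      of "monic_op (moment \<alpha> m \<omega> t) n * monic_op (moment \<alpha> m \<omega> t) n" \<omega>]
  by (simp add: hnorm_def opoly_eq_monic_op[OF t] power2_eq_square)

lemma hnorm_pos:
  assumes t: "admissible_nodes m t"
  shows "hnorm \<alpha> m \<omega> t n > 0"
  using monic_op_norm_pos[OF pos_def[OF t]] by (simp add: hnorm_eq[OF t])

lemma hankelD_eq_prod_hnorm:
  assumes t: "admissible_nodes m t"
  shows "hankelD \<alpha> m \<omega> n t = (\<Prod>j<n. hnorm \<alpha> m \<omega> t j)"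
  unfolding hankelD_def hnorm_eq[OF t] by (rule det_hankel_eq_prod_norms[OF pos_def[OF t]])

lemma moment_deformation_upd:
  assumes t: "admissible_nodes m t" and k: "k \<in> {1..m}"
  shows "moment_deformation (\<lambda>s. moment \<alpha> m \<omega> (t(k := s))) (t k) (\<omega> k * w0 \<alpha> (t k))"
proof
  show "\<forall>\<^sub>F s in nhds (t k). pos_def_moments (moment \<alpha> m \<omega> (t(k := s)))"
    using eventually_admissible_nodes_upd[OF t k] by eventually_elim (rule pos_def)
next
  fix i
  have "((\<lambda>s. \<omega> l * w0_tail_moment \<alpha> i ((t(k := s)) l)) has_real_derivative
      (if l = k then - (\<omega> k * w0 \<alpha> (t k) * t k ^ i) else 0)) (at (t k))" for l
    using DERIV_cmult[OF w0_tail_moment_has_real_derivative[OF alpha_gt admissible_nodes_pos[OF t k]], of "\<omega> k" i]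
    by (cases "l = k") (simp_all add: mult_ac)
  then have "((\<lambda>s. \<omega> 0 * w0_tail_moment \<alpha> i 0 + (\<Sum>l=1..m. \<omega> l * w0_tail_moment \<alpha> i ((t(k := s)) l)))
      has_real_derivative 0 + (\<Sum>l=1..m. if l = k then - (\<omega> k * w0 \<alpha> (t k) * t k ^ i) else 0)) (at (t k))"
    by (intro DERIV_add DERIV_const DERIV_sum)
  moreover have "(\<Sum>l=1..m. if l = k then - (\<omega> k * w0 \<alpha> (t k) * t k ^ i) else 0) = - (\<omega> k * w0 \<alpha> (t k) * t k ^ i)"
    using k by (simp add: sum.delta')
  moreover have ev: "\<forall>\<^sub>F s in nhds (t k). moment \<alpha> m \<omega> (t(k := s)) i =
      \<omega> 0 * w0_tail_moment \<alpha> i 0 + (\<Sum>l=1..m. \<omega> l * w0_tail_moment \<alpha> i ((t(k := s)) l))"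
    using eventually_admissible_nodes_upd[OF t k]
    by eventually_elim (rule moment_eq_w0_tail_moments[OF alpha_gt admissible_nodes_nonneg])
  ultimately show "((\<lambda>s. moment \<alpha> m \<omega> (t(k := s)) i) has_real_derivative - (\<omega> k * w0 \<alpha> (t k) * t k ^ i)) (at (t k))"
    using DERIV_cong_ev[OF refl ev refl] by simp
qed

lemma has_real_derivative_hnorm_upd:
  assumes t: "admissible_nodes m t" and k: "k \<in> {1..m}"
  shows "((\<lambda>s. hnorm \<alpha> m \<omega> (t(k := s)) j) has_real_derivative
           - (\<omega> k * w0 \<alpha> (t k) * (poly (opoly \<alpha> m \<omega> t j) (t k))\<^sup>2)) (at (t k))"
proof -
  interpret D: moment_deformation "\<lambda>s. moment \<alpha> m \<omega> (t(k := s))" "t k" "\<omega> k * w0 \<alpha> (t k)"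
    by (rule moment_deformation_upd[OF t k])
  have ev: "\<forall>\<^sub>F s in nhds (t k). hnorm \<alpha> m \<omega> (t(k := s)) j =
      moment_functional (moment \<alpha> m \<omega> (t(k := s)))
        (monic_op (moment \<alpha> m \<omega> (t(k := s))) j * monic_op (moment \<alpha> m \<omega> (t(k := s))) j)"
    using eventually_admissible_nodes_upd[OF t k] by eventually_elim (rule hnorm_eq)
  show ?thesis
    using D.has_real_derivative_norm_monic_op[of j] DERIV_cong_ev[OF refl ev refl]
    by (simp add: opoly_eq_monic_op[OF t])
qed

lemma pd_ln_hankelD:
  assumes t: "admissible_nodes m t" and k: "k \<in> {1..m}"
  shows "pd (\<lambda>s. ln (hankelD \<alpha> m \<omega> n s)) k t = - (\<Sum>j<n. Rnk \<alpha> m \<omega> j k t)"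
proof (rule pd_eqI)
  have "((\<lambda>s. ln (hnorm \<alpha> m \<omega> (t(k := s)) j)) has_real_derivative - Rnk \<alpha> m \<omega> j k t) (at (t k))" for j
    using DERIV_ln_divide[THEN DERIV_chain2, OF _ has_real_derivative_hnorm_upd[OF t k, of j]] hnorm_pos[OF t, of j]
    by (simp add: Rnk_def)
  then have "((\<lambda>s. \<Sum>j<n. ln (hnorm \<alpha> m \<omega> (t(k := s)) j)) has_real_derivative
      (\<Sum>j<n. - Rnk \<alpha> m \<omega> j k t)) (at (t k))"
    by (intro DERIV_sum)
  moreover have ev: "\<forall>\<^sub>F s in nhds (t k). ln (hankelD \<alpha> m \<omega> n (t(k := s))) = (\<Sum>j<n. ln (hnorm \<alpha> m \<omega> (t(k := s)) j))"
    using eventually_admissible_nodes_upd[OF t k]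
    by eventually_elim (simp add: hankelD_eq_prod_hnorm ln_prod hnorm_pos less_imp_neq[symmetric])
  ultimately show "((\<lambda>s. ln (hankelD \<alpha> m \<omega> n (t(k := s)))) has_real_derivative - (\<Sum>j<n. Rnk \<alpha> m \<omega> j k t)) (at (t k))"
    using DERIV_cong_ev[OF refl ev refl] by (simp add: sum_negf)
qed

lemma sigman_eq_subleading_coeff:
  assumes t: "admissible_nodes m t"
  shows "sigman \<alpha> m \<omega> n t = subleading_coeff (moment \<alpha> m \<omega> t) n + n * (n + \<alpha>)"
proof -
  interpret pearson_functional "moment \<alpha> m \<omega> t" \<alpha> "jump_term \<alpha> m \<omega> t"
    by (rule pearson[OF t])
  have "sigman \<alpha> m \<omega> n t = - (\<Sum>k=1..m. t k * (\<Sum>j<n. Rnk \<alpha> m \<omega> j k t))"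
    unfolding sigman_def by (simp add: pd_ln_hankelD[OF t] sum_negf)
  also have "\<dots> = - (\<Sum>j<n. jump_term \<alpha> m \<omega> t (P j * P j) / h j)"
    by (simp add: Rnk_def jump_term_def opoly_eq_monic_op[OF t] hnorm_eq[OF t] sum_distrib_left
        sum_divide_distrib power2_eq_square mult_ac) (rule sum.swap)
  finally show ?thesis by (simp add: sum_bdry_monic_op_sq_div_norm)
qed

lemma has_real_derivative_sigman_upd:
  assumes t: "admissible_nodes m t" and k: "k \<in> {1..m}" and n: "n \<ge> 1"
  shows "((\<lambda>s. sigman \<alpha> m \<omega> n (t(k := s))) has_real_derivative rnk \<alpha> m \<omega> n k t) (at (t k))"
proof -
  interpret D: moment_deformation "\<lambda>s. moment \<alpha> m \<omega> (t(k := s))" "t k" "\<omega> k * w0 \<alpha> (t k)"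
    by (rule moment_deformation_upd[OF t k])
  have ev: "\<forall>\<^sub>F s in nhds (t k). sigman \<alpha> m \<omega> n (t(k := s)) =
      subleading_coeff (moment \<alpha> m \<omega> (t(k := s))) n + n * (n + \<alpha>)"
    using eventually_admissible_nodes_upd[OF t k] by eventually_elim (rule sigman_eq_subleading_coeff)
  show ?thesis
    using DERIV_add[OF D.has_real_derivative_subleading_coeff[OF n] DERIV_const] DERIV_cong_ev[OF refl ev refl]
    by (simp add: rnk_def opoly_eq_monic_op[OF t] hnorm_eq[OF t])
qed

lemma pd_sigman: "admissible_nodes m t \<Longrightarrow> k \<in> {1..m} \<Longrightarrow> n \<ge> 1 \<Longrightarrow> pd (sigman \<alpha> m \<omega> n) k t = rnk \<alpha> m \<omega> n k t"
  by (rule pd_eqI[OF has_real_derivative_sigman_upd])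

lemma betan_eq:
  assumes t: "admissible_nodes m t" and n: "n \<ge> 1"
  shows "betan \<alpha> m \<omega> n t = (\<Sum>j=1..m. t j * pd (sigman \<alpha> m \<omega> n) j t) - sigman \<alpha> m \<omega> n t + n * (n + \<alpha>)"
proof -
  interpret pearson_functional "moment \<alpha> m \<omega> t" \<alpha> "jump_term \<alpha> m \<omega> t"
    by (rule pearson[OF t])
  have "(\<Sum>j=1..m. t j * pd (sigman \<alpha> m \<omega> n) j t) = jump_term \<alpha> m \<omega> t (P n * P (n - 1)) / h (n - 1)"
    by (simp add: pd_sigman[OF t _ n] rnk_def jump_term_def opoly_eq_monic_op[OF t] hnorm_eq[OF t]
        sum_divide_distrib mult_ac)
  also have "\<dots> = betan \<alpha> m \<omega> n t + subleading_coeff (moment \<alpha> m \<omega> t) n"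
    using norm_monic_op_eq_bdry[OF n] monic_op_norm_pos[OF pos_def, of "n - 1"]
    by (simp add: betan_def hnorm_eq[OF t] field_simps)
  finally show ?thesis by (simp add: sigman_eq_subleading_coeff[OF t])
qed

lemma differentiable_rnk_upd:
  assumes t: "admissible_nodes m t" and k: "k \<in> {1..m}" and j: "j \<in> {1..m}"
  shows "\<exists>D. ((\<lambda>s. rnk \<alpha> m \<omega> n j (t(k := s))) has_real_derivative D) (at (t k))"
proof -
  interpret D: moment_deformation "\<lambda>s. moment \<alpha> m \<omega> (t(k := s))" "t k" "\<omega> k * w0 \<alpha> (t k)"
    by (rule moment_deformation_upd[OF t k])
  define x where "x s = (t(k := s)) j" for s
  have x: "(x has_real_derivative (if j = k then 1 else 0)) (at (t k))"
    unfolding x_def[abs_def] by (cases "j = k") auto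
  have poly_opoly: "\<exists>D. ((\<lambda>s. poly (opoly \<alpha> m \<omega> (t(k := s)) i) (x s)) has_real_derivative D) (at (t k))" for i
  proof -
    have ev: "\<forall>\<^sub>F s in nhds (t k). poly (opoly \<alpha> m \<omega> (t(k := s)) i) (x s) =
        poly (monic_op (moment \<alpha> m \<omega> (t(k := s))) i) (x s)"
      using eventually_admissible_nodes_upd[OF t k] by eventually_elim (simp add: opoly_eq_monic_op)
    obtain D where "((\<lambda>s. poly (monic_op (moment \<alpha> m \<omega> (t(k := s))) i) (x s)) has_real_derivative D) (at (t k))"
      using D.differentiable_poly_monic_op[OF x, of i] by blast
    then show ?thesis using DERIV_cong_ev[OF refl ev refl] by blast
  qed
  then obtain d1 d2 where
    d1: "((\<lambda>s. poly (opoly \<alpha> m \<omega> (t(k := s)) n) (x s)) has_real_derivative d1) (at (t k))" and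
    d2: "((\<lambda>s. poly (opoly \<alpha> m \<omega> (t(k := s)) (n - 1)) (x s)) has_real_derivative d2) (at (t k))"
    by blast
  have "\<exists>dw. (w0 \<alpha> has_real_derivative dw) (at (t j))"
    unfolding w0_def[abs_def] using admissible_nodes_pos[OF t j] by (auto intro!: derivative_eq_intros)
  then obtain dw where "(w0 \<alpha> has_real_derivative dw) (at (x (t k)))" by (auto simp: x_def)
  moreover have "hnorm \<alpha> m \<omega> (t(k := t k)) (n - 1) \<noteq> 0" using hnorm_pos[OF t, of "n - 1"] by simp
  ultimately have "\<exists>D. ((\<lambda>s. \<omega> j * w0 \<alpha> (x s) / hnorm \<alpha> m \<omega> (t(k := s)) (n - 1) *
      poly (opoly \<alpha> m \<omega> (t(k := s)) n) (x s) * poly (opoly \<alpha> m \<omega> (t(k := s)) (n - 1)) (x s))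
      has_real_derivative D) (at (t k))"
    using DERIV_mult[OF DERIV_mult[OF DERIV_divide[OF DERIV_cmult[OF DERIV_chain2[OF _ x]]
        has_real_derivative_hnorm_upd[OF t k]] d1] d2] by blast
  then show ?thesis by (simp only: rnk_def x_def)
qed

lemma pd_betan_eq_sum:
  assumes t: "admissible_nodes m t" and k: "k \<in> {1..m}" and n: "n \<ge> 1"
  shows "pd (betan \<alpha> m \<omega> n) k t = (\<Sum>j=1..m. t j * pd (pd (sigman \<alpha> m \<omega> n) j) k t)"
proof (rule pd_eqI)
  define G where "G j = pd (pd (sigman \<alpha> m \<omega> n) j) k t" for j
  have G: "((\<lambda>s. pd (sigman \<alpha> m \<omega> n) j (t(k := s))) has_real_derivative G j) (at (t k))" if j: "j \<in> {1..m}" for j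
  proof -
    have ev: "\<forall>\<^sub>F s in nhds (t k). pd (sigman \<alpha> m \<omega> n) j (t(k := s)) = rnk \<alpha> m \<omega> n j (t(k := s))"
      using eventually_admissible_nodes_upd[OF t k] by eventually_elim (rule pd_sigman[OF _ j n])
    obtain D where "((\<lambda>s. pd (sigman \<alpha> m \<omega> n) j (t(k := s))) has_real_derivative D) (at (t k))"
      using differentiable_rnk_upd[OF t k j] DERIV_cong_ev[OF refl ev refl] by blast
    moreover from this have "G j = D" unfolding G_def by (rule pd_eqI)
    ultimately show ?thesis by simp
  qed
  have upd: "((\<lambda>s. (t(k := s)) j) has_real_derivative (if j = k then 1 else 0)) (at (t k))" for j
    by (cases "j = k") auto
  have "((\<lambda>s. sigman \<alpha> m \<omega> n (t(k := s))) has_real_derivative pd (sigman \<alpha> m \<omega> n) k (t(k := t k))) (at (t k))"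
    using has_real_derivative_sigman_upd[OF t k n] by (simp add: pd_sigman[OF t k n])
  then have "((\<lambda>s. (\<Sum>j=1..m. (t(k := s)) j * pd (sigman \<alpha> m \<omega> n) j (t(k := s))) - sigman \<alpha> m \<omega> n (t(k := s)) + n * (n + \<alpha>))
      has_real_derivative (\<Sum>j=1..m. (if j = k then 1 else 0) * pd (sigman \<alpha> m \<omega> n) j (t(k := t k)) + G j * (t(k := t k)) j)
        - pd (sigman \<alpha> m \<omega> n) k (t(k := t k)) + 0) (at (t k))"
    by (intro DERIV_add DERIV_diff DERIV_sum DERIV_mult upd G DERIV_const) auto
  moreover have "(\<Sum>j=1..m. (if j = k then 1 else 0) * pd (sigman \<alpha> m \<omega> n) j t) = pd (sigman \<alpha> m \<omega> n) k t"
    using k by (simp add: if_distrib[of "\<lambda>c. c * _"] sum.delta' cong: if_cong)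
  then have "(\<Sum>j=1..m. (if j = k then 1 else 0) * pd (sigman \<alpha> m \<omega> n) j (t(k := t k)) + G j * (t(k := t k)) j)
        - pd (sigman \<alpha> m \<omega> n) k (t(k := t k)) + 0 = (\<Sum>j=1..m. t j * G j)"
    by (simp add: sum.distrib mult.commute)
  moreover have ev: "\<forall>\<^sub>F s in nhds (t k). betan \<alpha> m \<omega> n (t(k := s)) =
      (\<Sum>j=1..m. (t(k := s)) j * pd (sigman \<alpha> m \<omega> n) j (t(k := s))) - sigman \<alpha> m \<omega> n (t(k := s)) + n * (n + \<alpha>)"
    using eventually_admissible_nodes_upd[OF t k] by eventually_elim (rule betan_eq[OF _ n])
  ultimately show "((\<lambda>s. betan \<alpha> m \<omega> n (t(k := s))) has_real_derivative (\<Sum>j=1..m. t j * G j)) (at (t k))"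
    using DERIV_cong_ev[OF refl ev refl] by simp
qed

lemma pd_betan:
  assumes t: "admissible_nodes m t" and k: "k \<in> {1..m}"
  shows "pd (betan \<alpha> m \<omega> n) k t = betan \<alpha> m \<omega> n t * (Rnk \<alpha> m \<omega> (n - 1) k t - Rnk \<alpha> m \<omega> n k t)"
proof (rule pd_eqI)
  let ?c = "\<omega> k * w0 \<alpha> (t k)" and ?h = "hnorm \<alpha> m \<omega> t" and ?P = "\<lambda>j. poly (opoly \<alpha> m \<omega> t j) (t k)"
  have "hnorm \<alpha> m \<omega> (t(k := t k)) (n - 1) \<noteq> 0" using hnorm_pos[OF t, of "n - 1"] by simp
  from DERIV_divide[OF has_real_derivative_hnorm_upd[OF t k, of n] has_real_derivative_hnorm_upd[OF t k, of "n - 1"] this]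
  have "((\<lambda>s. betan \<alpha> m \<omega> n (t(k := s))) has_real_derivative
      (- (?c * (?P n)\<^sup>2) * ?h (n - 1) - ?h n * - (?c * (?P (n - 1))\<^sup>2)) / (?h (n - 1) * ?h (n - 1))) (at (t k))"
    unfolding fun_upd_triv betan_def .
  moreover have "(- (?c * (?P n)\<^sup>2) * ?h (n - 1) - ?h n * - (?c * (?P (n - 1))\<^sup>2)) / (?h (n - 1) * ?h (n - 1)) =
      betan \<alpha> m \<omega> n t * (Rnk \<alpha> m \<omega> (n - 1) k t - Rnk \<alpha> m \<omega> n k t)"
    using hnorm_pos[OF t, of n] hnorm_pos[OF t, of "n - 1"] by (simp add: betan_def Rnk_def field_simps)
  ultimately show "((\<lambda>s. betan \<alpha> m \<omega> n (t(k := s))) has_real_derivative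
      betan \<alpha> m \<omega> n t * (Rnk \<alpha> m \<omega> (n - 1) k t - Rnk \<alpha> m \<omega> n k t)) (at (t k))"
    by simp
qed

lemma rnk_sq:
  assumes t: "admissible_nodes m t"
  shows "(rnk \<alpha> m \<omega> n k t)\<^sup>2 = betan \<alpha> m \<omega> n t * Rnk \<alpha> m \<omega> n k t * Rnk \<alpha> m \<omega> (n - 1) k t"
  using hnorm_pos[OF t, of n] by (simp add: rnk_def Rnk_def betan_def field_simps power2_eq_square)

end

lemma quadratic_root_sgn:
  fixes \<beta> B r R R' \<omega> a a' :: real
  assumes "\<beta> > 0" and B: "B = \<beta> * (R' - R)" and r: "r\<^sup>2 = \<beta> * R * R'"
    and R: "R = \<omega> * a" and R': "R' = \<omega> * a'" and "a \<ge> 0" "a' \<ge> 0"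
  shows "R = 1 / (2 * \<beta>) * (- B + sgn \<omega> * sqrt (B\<^sup>2 + 4 * \<beta> * r\<^sup>2))"
proof -
  have "B\<^sup>2 + 4 * \<beta> * r\<^sup>2 = (\<beta> * (R + R'))\<^sup>2"
    unfolding B r by (simp add: power2_eq_square algebra_simps)
  then have "sqrt (B\<^sup>2 + 4 * \<beta> * r\<^sup>2) = \<beta> * \<bar>\<omega>\<bar> * (a + a')"
    using \<open>\<beta> > 0\<close> \<open>a \<ge> 0\<close> \<open>a' \<ge> 0\<close> unfolding R R' by (simp add: abs_mult distrib_left[symmetric])
  then have "sgn \<omega> * sqrt (B\<^sup>2 + 4 * \<beta> * r\<^sup>2) = \<beta> * (R + R')"
    unfolding R R' using mult_sgn_abs[of \<omega>] by (simp add: algebra_simps)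
  then show ?thesis using \<open>\<beta> > 0\<close> unfolding B by (simp add: field_simps)
qed

theorem lemma2p10:
  fixes m n k :: nat and \<alpha> :: real and t \<omega> :: "nat \<Rightarrow> real"
  assumes "m \<ge> 1" and "\<alpha> > -1"
    and "0 < t 1" and "\<forall>j\<in>{1..<m}. t j < t (Suc j)"
    and "\<forall>l\<le>m. (\<Sum>i\<le>l. \<omega> i) \<ge> 0"
    and "\<exists>l\<le>m. (\<Sum>i\<le>l. \<omega> i) > 0"
    and "n \<ge> 1" and "k \<in> {1..m}"
  shows "rnk \<alpha> m \<omega> n k t = pd (sigman \<alpha> m \<omega> n) k t
    \<and> betan \<alpha> m \<omega> n t = (\<Sum>j=1..m. t j * pd (sigman \<alpha> m \<omega> n) j t)
          - sigman \<alpha> m \<omega> n t + real n * (real n + \<alpha>)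
    \<and> pd (betan \<alpha> m \<omega> n) k t = (\<Sum>j=1..m. t j * pd (pd (sigman \<alpha> m \<omega> n) j) k t)
    \<and> Rnk \<alpha> m \<omega> n k t = 1 / (2 * betan \<alpha> m \<omega> n t) *
        (- pd (betan \<alpha> m \<omega> n) k t + sgn (\<omega> k) *
           sqrt ((pd (betan \<alpha> m \<omega> n) k t)\<^sup>2 + 4 * betan \<alpha> m \<omega> n t * (rnk \<alpha> m \<omega> n k t)\<^sup>2))"
proof -
  interpret jump_laguerre \<alpha> m \<omega> by unfold_locales (use assms(2,5,6) in auto)
  have t: "admissible_nodes m t" using assms(3,4) by (simp add: admissible_nodes_def)
  note k = assms(8) and n = assms(7)
  have \<beta>: "betan \<alpha> m \<omega> n t > 0" using hnorm_pos[OF t] by (simp add: betan_def)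
  have R: "Rnk \<alpha> m \<omega> j k t = \<omega> k * (w0 \<alpha> (t k) / hnorm \<alpha> m \<omega> t j * (poly (opoly \<alpha> m \<omega> t j) (t k))\<^sup>2)"
    and a: "w0 \<alpha> (t k) / hnorm \<alpha> m \<omega> t j * (poly (opoly \<alpha> m \<omega> t j) (t k))\<^sup>2 \<ge> 0" for j
    using admissible_nodes_pos[OF t k] hnorm_pos[OF t, of j] by (simp_all add: Rnk_def w0_def)
  have "Rnk \<alpha> m \<omega> n k t = 1 / (2 * betan \<alpha> m \<omega> n t) *
      (- pd (betan \<alpha> m \<omega> n) k t + sgn (\<omega> k) *
         sqrt ((pd (betan \<alpha> m \<omega> n) k t)\<^sup>2 + 4 * betan \<alpha> m \<omega> n t * (rnk \<alpha> m \<omega> n k t)\<^sup>2))"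
    by (rule quadratic_root_sgn[OF \<beta> pd_betan[OF t k] rnk_sq[OF t] R R a a])
  then show ?thesis
    using pd_sigman[OF t k n] betan_eq[OF t n] pd_betan_eq_sum[OF t k n] by simp
qed

end
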